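(* Let $q$ be a prime power, $0\le k\le n$, and let $i$ be an integer with $0\le i<\left[\begin{smallmatrix} n\\ k\end{smallmatrix}\right]_q$. Then Encoding Algorithm A, run on input $i$, outputs $\mathrm{EXT}(X)$ for a subspace $X\in\mathcal{G}_q(n,k)$ satisfying $\mathrm{I}_{\mathrm{EXT}}(X)=i$.
   Context: $\mathcal{G}_q(n,k)$ is the set of $k$-dimensional subspaces of $\mathbb{F}_q^n$, with field elements identified with $\mathbb{Z}_q=\{0,\dots,q-1\}$ (with $0\mapsto0,1\mapsto1$). $\left[\begin{smallmatrix} n\\ k\end{smallmatrix}\right]_q=\prod_{i=0}^{k-1}\frac{q^{n-i}-1}{q^{k-i}-1}$, $\left[\begin{smallmatrix} n\\ 0\end{smallmatrix}\right]_q=1$, and it is $0$ if $k>n$ or $k<0$. For $X\in\mathcal{G}_q(n,k)$: $\mathrm{RE}(X)$ is the unique $k\times n$ reduced row echelon matrix whose rows span $X$, columns labelled $X_n,\dots,X_1$ left to right; $v(X)=(v_n,\dots,v_1)$ is binary with $v_i=1$ iff column $X_i$ contains a row's leading one; $\mathrm{EXT}(X)$ is the $(k+1)\times n$ matrix with top row $v(X)$ above $\mathrm{RE}(X)$, its $i$-th column being $\binom{v_i}{X_i}$. For a $q$-ary vector $y=(y_1,\dots,y_r)$, $\{y\}=\sum_t y_tq^{r-t}$; for an integer $a\ge0$, $\{a\}_q$ denotes its base-$q$ representation as a column vector of length $k$ (top entry most significant). Order: $X<Y$ if at the least index $i$ where the $i$-th columns of $\mathrm{EXT}(X),\mathrm{EXT}(Y)$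 differ, $\{\binom{v(X)_i}{X_i}\}<\{\binom{v(Y)_i}{Y_i}\}$; $\mathrm{I}_{\mathrm{EXT}}(X)$ is the number of $Y\in\mathcal{G}_q(n,k)$ with $Y<X$. Encoding Algorithm A: set $i_0=i$, $w_0=0$. For $j=1,\dots,n$: (1) if $w_{j-1}=k$, set $v_j=0$, $w_j=w_{j-1}$, $X_j=\{0\}_q$, $i_j=i_{j-1}$; (2) otherwise, if $i_{j-1}\ge q^{k-w_{j-1}}\left[\begin{smallmatrix} n-j\\ k-w_{j-1}\end{smallmatrix}\right]_q$, set $v_j=1$, $w_j=w_{j-1}+1$, $X_j=\{q^{w_{j-1}}\}_q$, $i_j=i_{j-1}-q^{k-w_{j-1}}\left[\begin{smallmatrix} n-j\\ k-w_{j-1}\end{smallmatrix}\right]_q$; (3) otherwise let $val=\lfloor i_{j-1}/\left[\begin{smallmatrix} n-j\\ k-w_{j-1}\end{smallmatrix}\right]_q\rfloor$ and set $v_j=0$, $w_j=w_{j-1}$, $X_j=\{val\cdot q^{w_{j-1}}\}_q$, $i_j=i_{j-1}-val\cdot\left[\begin{smallmatrix} n-j\\ k-w_{j-1}\end{smallmatrix}\right]_q$. Output the matrix $\begin{pmatrix} v_n&\cdots&v_1\\ X_n&\cdots&X_1\end{pmatrix}$. *)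

theory Defs
  imports Complex_Main "HOL-Computational_Algebra.Primes"
begin

text \<open>Vectors of F^n are functions nat => 'a whose support lies in {1..n};
coordinate c is the column labelled X_c (columns X_n, ..., X_1 from left to right).
A k x n matrix is a function M :: nat => nat => 'a, rows indexed 1..k (top to bottom),
columns indexed by labels 1..n, zero outside this range.\<close>

definition prime_power :: "nat \<Rightarrow> bool" where
  "prime_power q \<longleftrightarrow> (\<exists>p m. prime p \<and> m \<ge> 1 \<and> q = p ^ m)"

definition gauss_binom :: "nat \<Rightarrow> nat \<Rightarrow> nat \<Rightarrow> real" where
  "gauss_binom q n k =
     (if k > n then 0
      else (\<Prod>i<k. (real q ^ (n - i) - 1) / (real q ^ (k - i) - 1)))"

definition is_vec :: "nat \<Rightarrow> (nat \<Rightarrow> 'a::zero) \<Rightarrow> bool" where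
  "is_vec n v \<longleftrightarrow> (\<forall>c. v c \<noteq> 0 \<longrightarrow> c \<in> {1..n})"

definition is_mat :: "nat \<Rightarrow> nat \<Rightarrow> (nat \<Rightarrow> nat \<Rightarrow> 'a::zero) \<Rightarrow> bool" where
  "is_mat k n M \<longleftrightarrow> (\<forall>r c. M r c \<noteq> 0 \<longrightarrow> r \<in> {1..k} \<and> c \<in> {1..n})"

definition rowspan :: "nat \<Rightarrow> (nat \<Rightarrow> nat \<Rightarrow> 'a::field) \<Rightarrow> (nat \<Rightarrow> 'a) set" where
  "rowspan k M = {(\<lambda>c. \<Sum>r\<in>{1..k}. a r * M r c) | a. True}"

definition rows_indep :: "nat \<Rightarrow> (nat \<Rightarrow> nat \<Rightarrow> 'a::field) \<Rightarrow> bool" where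
  "rows_indep k M \<longleftrightarrow>
     (\<forall>a. (\<forall>c. (\<Sum>r\<in>{1..k}. a r * M r c) = 0) \<longrightarrow> (\<forall>r\<in>{1..k}. a r = 0))"

definition grassmannian :: "nat \<Rightarrow> nat \<Rightarrow> (nat \<Rightarrow> 'a::field) set set" where
  "grassmannian n k = {X. \<exists>M. is_mat k n M \<and> rows_indep k M \<and> X = rowspan k M}"

text \<open>Position (column label) of the leading (leftmost nonzero, i.e. largest label) entry of row r.\<close>
definition lead_pos :: "(nat \<Rightarrow> nat \<Rightarrow> 'a::zero) \<Rightarrow> nat \<Rightarrow> nat" where
  "lead_pos M r = (GREATEST c. M r c \<noteq> 0)"

definition is_rref :: "nat \<Rightarrow> nat \<Rightarrow> (nat \<Rightarrow> nat \<Rightarrow> 'a::field) \<Rightarrow> bool" where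
  "is_rref k n M \<longleftrightarrow> is_mat k n M \<and>
     (\<forall>r\<in>{1..k}. (\<exists>c. M r c \<noteq> 0) \<and> M r (lead_pos M r) = 1) \<and>
     (\<forall>r\<in>{1..k}. \<forall>r'\<in>{1..k}. r < r' \<longrightarrow> lead_pos M r' < lead_pos M r) \<and>
     (\<forall>r\<in>{1..k}. \<forall>r'\<in>{1..k}. r' \<noteq> r \<longrightarrow> M r' (lead_pos M r) = 0)"

definition RE :: "nat \<Rightarrow> nat \<Rightarrow> (nat \<Rightarrow> 'a::field) set \<Rightarrow> nat \<Rightarrow> nat \<Rightarrow> 'a" where
  "RE k n X = (THE M. is_rref k n M \<and> rowspan k M = X)"

definition vX :: "nat \<Rightarrow> nat \<Rightarrow> (nat \<Rightarrow> 'a::field) set \<Rightarrow> nat \<Rightarrow> nat" where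
  "vX k n X c = (if \<exists>r\<in>{1..k}. lead_pos (RE k n X) r = c then 1 else 0)"

definition EXT :: "('a::field \<Rightarrow> nat) \<Rightarrow> nat \<Rightarrow> nat \<Rightarrow> (nat \<Rightarrow> 'a) set \<Rightarrow> nat \<Rightarrow> nat \<Rightarrow> nat" where
  "EXT enc k n X r c =
     (if c \<in> {1..n} then
        (if r = 0 then vX k n X c else if r \<le> k then enc (RE k n X r c) else 0)
      else 0)"

definition col_val :: "nat \<Rightarrow> nat \<Rightarrow> (nat \<Rightarrow> nat \<Rightarrow> nat) \<Rightarrow> nat \<Rightarrow> nat" where
  "col_val q k E c = (\<Sum>t\<in>{0..k}. E t c * q ^ (k - t))"

definition ext_less ::
  "nat \<Rightarrow> ('a::field \<Rightarrow> nat) \<Rightarrow> nat \<Rightarrow> nat \<Rightarrow> (nat \<Rightarrow> 'a) set \<Rightarrow> (nat \<Rightarrow> 'a) set \<Rightarrow> bool" where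
  "ext_less q enc n k X Y \<longleftrightarrow>
     (\<exists>i\<in>{1..n}.
        (\<forall>j\<in>{1..<i}. \<forall>t\<in>{0..k}. EXT enc k n X t j = EXT enc k n Y t j) \<and>
        (\<exists>t\<in>{0..k}. EXT enc k n X t i \<noteq> EXT enc k n Y t i) \<and>
        col_val q k (EXT enc k n X) i < col_val q k (EXT enc k n Y) i)"

definition I_EXT :: "nat \<Rightarrow> ('a::field \<Rightarrow> nat) \<Rightarrow> nat \<Rightarrow> nat \<Rightarrow> (nat \<Rightarrow> 'a) set \<Rightarrow> nat" where
  "I_EXT q enc n k X = card {Y \<in> grassmannian n k. ext_less q enc n k Y X}"

text \<open>Encoding Algorithm A. alg_state q n k i j = (i_j, w_j).\<close>
primrec alg_state :: "nat \<Rightarrow> nat \<Rightarrow> nat \<Rightarrow> int \<Rightarrow> nat \<Rightarrow> int \<times> nat" where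
  "alg_state q n k i 0 = (i, 0)"
| "alg_state q n k i (Suc j) =
     (let (ii, w) = alg_state q n k i j;
          g = gauss_binom q (n - Suc j) (k - w)
      in if w = k then (ii, w)
         else if real_of_int ii \<ge> real q ^ (k - w) * g
           then (ii - \<lfloor>real q ^ (k - w) * g\<rfloor>, w + 1)
         else (let val = \<lfloor>real_of_int ii / g\<rfloor> in (ii - \<lfloor>real_of_int val * g\<rfloor>, w)))"

text \<open>Step j (1 \<le> j \<le> n) of the algorithm: the pair (v_j, a_j) where X_j = {a_j}_q.\<close>
definition alg_col :: "nat \<Rightarrow> nat \<Rightarrow> nat \<Rightarrow> int \<Rightarrow> nat \<Rightarrow> nat \<times> nat" where
  "alg_col q n k i j =
     (let (ii, w) = alg_state q n k i (j - 1);
          g = gauss_binom q (n - j) (k - w)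
      in if w = k then (0, 0)
         else if real_of_int ii \<ge> real q ^ (k - w) * g then (1, q ^ w)
         else (0, nat \<lfloor>real_of_int ii / g\<rfloor> * q ^ w))"

text \<open>Output matrix: row 0 is (v_n ... v_1), rows 1..k hold the base-q columns {a_j}_q
of length k (top entry most significant); columns indexed by labels 1..n.\<close>
definition alg_out :: "nat \<Rightarrow> nat \<Rightarrow> nat \<Rightarrow> int \<Rightarrow> nat \<Rightarrow> nat \<Rightarrow> nat" where
  "alg_out q n k i r j =
     (if j \<in> {1..n} then
        (if r = 0 then fst (alg_col q n k i j)
         else if r \<le> k then (snd (alg_col q n k i j) div q ^ (k - r)) mod q
         else 0)
      else 0)"

end

theory Submission
  imports Defs
begin

(* Reduced echelon matrices with k rows and n columns parametrize G_q(n,k), and the EXT order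
   compares them column by column starting from X_1, each column read as the number {(v_j; X_j)}.
   Column X_1 of an echelon matrix either carries no pivot -- then it is an arbitrary vector of
   F^k, coded below q^k, and the remaining columns form an echelon matrix with k rows -- or the
   pivot of the last row -- then it is the unit vector e_k, coded q^k + 1, and the rest has k - 1
   rows. Hence the q^k [n-1,k]_q matrices of the first kind precede all others, which gives the
   q-Pascal rule, and the rank of an echelon matrix is a mixed-radix number whose digits are
   exactly the quantities Algorithm A extracts from i. *)

section \<open>Gaussian binomial coefficients\<close>

fun qbinom :: "nat \<Rightarrow> nat \<Rightarrow> nat \<Rightarrow> nat" where
  "qbinom q n 0 = 1"
| "qbinom q 0 (Suc k) = 0"
| "qbinom q (Suc n) (Suc k) = qbinom q n k + q ^ Suc k * qbinom q n (Suc k)"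

lemma qbinom_eq_0: "n < k \<Longrightarrow> qbinom q n k = 0"
  by (induction q n k rule: qbinom.induct) auto

lemma qbinom_Suc: "1 \<le> k \<Longrightarrow> qbinom q (Suc m) k = qbinom q m (k - 1) + q ^ k * qbinom q m k"
  by (cases k) auto

lemma gauss_binom_eq_prod_ratio:
  "k \<le> n \<Longrightarrow> gauss_binom q n k = (\<Prod>i<k. real q ^ (n - i) - 1) / (\<Prod>i<k. real q ^ (k - i) - 1)"
  unfolding gauss_binom_def by (simp add: prod_dividef)

lemma gauss_binom_den_pos: "2 \<le> q \<Longrightarrow> (\<Prod>i<k. real q ^ (k - i) - 1) > 0"
  by (intro prod_pos) auto

lemma gauss_binom_Suc_Suc:
  assumes q: "2 \<le> q"
  shows "gauss_binom q (Suc n) (Suc k) = gauss_binom q n k + real q ^ Suc k * gauss_binom q n (Suc k)"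
proof -
  consider "k < n" | "k = n" | "n < k" by linarith
  then show ?thesis
  proof cases
    case 1
    define A where "A = (\<Prod>i<k. real q ^ (n - i) - 1)"
    define B where "B = (\<Prod>i<k. real q ^ (k - i) - 1)"
    have B: "B > 0" unfolding B_def using gauss_binom_den_pos[OF q] .
    have C: "real q ^ Suc k - 1 > 0" using q by (simp add: one_less_power del: power_Suc)
    have num: "(\<Prod>i<Suc k. real q ^ (Suc n - i) - 1) = (real q ^ Suc n - 1) * A"
      unfolding A_def by (subst prod.lessThan_Suc_shift) simp
    have den: "(\<Prod>i<Suc k. real q ^ (Suc k - i) - 1) = (real q ^ Suc k - 1) * B"
      unfolding B_def by (subst prod.lessThan_Suc_shift) simp
    have num': "(\<Prod>i<Suc k. real q ^ (n - i) - 1) = A * (real q ^ (n - k) - 1)"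
      unfolding A_def by simp
    have pow: "real q ^ Suc n = real q ^ Suc k * real q ^ (n - k)"
      using 1 by (simp flip: power_add)
    have le: "Suc k \<le> Suc n" "k \<le> n" "Suc k \<le> n" using 1 by simp_all
    have "gauss_binom q (Suc n) (Suc k) = (real q ^ Suc n - 1) * A / ((real q ^ Suc k - 1) * B)"
      unfolding gauss_binom_eq_prod_ratio[OF le(1)] num den ..
    also have "\<dots> = A / B + real q ^ Suc k * (A * (real q ^ (n - k) - 1) / ((real q ^ Suc k - 1) * B))"
      unfolding pow using B C by (simp add: field_simps del: power_Suc)
    also have "\<dots> = gauss_binom q n k + real q ^ Suc k * gauss_binom q n (Suc k)"
      unfolding gauss_binom_eq_prod_ratio[OF le(2)] gauss_binom_eq_prod_ratio[OF le(3)] num' den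
        A_def B_def ..
    finally show ?thesis .
  next
    case 2
    have "gauss_binom q m m = 1" for m
      unfolding gauss_binom_eq_prod_ratio[OF order_refl]
      using gauss_binom_den_pos[OF q, of m] by (intro divide_self) linarith
    then show ?thesis using 2 by (simp add: gauss_binom_def)
  next
    case 3
    then show ?thesis by (simp add: gauss_binom_def)
  qed
qed

lemma gauss_binom_eq_qbinom: "2 \<le> q \<Longrightarrow> gauss_binom q n k = real (qbinom q n k)"
proof (induction q n k rule: qbinom.induct)
  case (3 q n k)
  then show ?case by (simp add: gauss_binom_Suc_Suc)
qed (simp_all add: gauss_binom_def)

section \<open>Algorithm A\<close>

lemma alg_state_weight_le: "snd (alg_state q n k i j) \<le> k"
  by (induction j) (auto simp: Let_def split: prod.splits)

lemma alg_state_Suc_shift: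
  assumes "alg_state q (Suc m) k i 1 = (i1, w1)"
  shows "alg_state q (Suc m) k i (Suc j) =
     (fst (alg_state q m (k - w1) i1 j), snd (alg_state q m (k - w1) i1 j) + w1)"
proof (induction j)
  case 0
  then show ?case using assms by simp
next
  case (Suc j)
  have w1: "w1 \<le> k" using alg_state_weight_le[of q "Suc m" k i 1] assms by simp
  obtain ii w where st: "alg_state q m (k - w1) i1 j = (ii, w)" by fastforce
  have "w \<le> k - w1" using alg_state_weight_le[of q m "k - w1" i1 j] st by simp
  then have "k - (w + w1) = k - w1 - w" "(w + w1 = k) = (w = k - w1)" using w1 by auto
  then show ?case
    unfolding alg_state.simps(2)[of q "Suc m" k i "Suc j"] alg_state.simps(2)[of q m "k - w1" i1 j]
    using Suc st by (simp add: Let_def)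
qed

lemma alg_col_Suc_shift:
  assumes "alg_state q (Suc m) k i 1 = (i1, w1)" and "1 \<le> j"
  shows "alg_col q (Suc m) k i (Suc j) =
     (fst (alg_col q m (k - w1) i1 j), snd (alg_col q m (k - w1) i1 j) * q ^ w1)"
proof -
  obtain j' where j': "j = Suc j'" using assms(2) by (cases j) auto
  have w1: "w1 \<le> k" using alg_state_weight_le[of q "Suc m" k i 1] assms by simp
  obtain ii w where st: "alg_state q m (k - w1) i1 j' = (ii, w)" by fastforce
  have "w \<le> k - w1" using alg_state_weight_le[of q m "k - w1" i1 j'] st by simp
  then have "k - (w + w1) = k - w1 - w" "(w + w1 = k) = (w = k - w1)" using w1 by auto
  moreover have "alg_state q (Suc m) k i j = (ii, w + w1)"
    using alg_state_Suc_shift[OF assms(1), of j'] st j' by simp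
  ultimately show ?thesis
    unfolding alg_col_def using st j' by (simp add: Let_def power_add)
qed

lemma alg_step_pivot:
  assumes q: "2 \<le> q" and k: "1 \<le> k" and i: "int (q ^ k * qbinom q m k) \<le> i"
  shows "alg_state q (Suc m) k i 1 = (i - int (q ^ k * qbinom q m k), 1)"
    and "alg_col q (Suc m) k i 1 = (1, 1)"
proof -
  have G: "gauss_binom q m k = real (qbinom q m k)" using gauss_binom_eq_qbinom[OF q] .
  have E: "real q ^ k * real (qbinom q m k) = real_of_int (int (q ^ k * qbinom q m k))" by simp
  have "real q ^ k * real (qbinom q m k) \<le> real_of_int i" unfolding E using i by linarith
  moreover have "\<lfloor>real q ^ k * real (qbinom q m k)\<rfloor> = int (q ^ k * qbinom q m k)"
    unfolding E by (rule floor_of_int)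
  ultimately show "alg_state q (Suc m) k i 1 = (i - int (q ^ k * qbinom q m k), 1)"
    and "alg_col q (Suc m) k i 1 = (1, 1)"
    using k by (simp_all add: alg_col_def Let_def G)
qed

lemma alg_step_nonpivot:
  assumes q: "2 \<le> q" and i0: "0 \<le> i" and i: "i < int (q ^ k * qbinom q m k)"
  shows "alg_state q (Suc m) k i 1 = (i mod int (qbinom q m k), 0)"
    and "alg_col q (Suc m) k i 1 = (0, nat (i div int (qbinom q m k)))"
proof -
  let ?g = "qbinom q m k"
  have G: "gauss_binom q m k = real ?g" using gauss_binom_eq_qbinom[OF q] .
  have E: "real q ^ k * real ?g = real_of_int (int (q ^ k * ?g))" by simp
  have C: "\<not> real q ^ k * real ?g \<le> real_of_int i" unfolding E using i by linarith
  have D: "\<lfloor>real_of_int i / real ?g\<rfloor> = i div int ?g"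
    using floor_divide_of_int_eq[of i "int ?g"] by simp
  have D2: "\<lfloor>real_of_int (i div int ?g) * real ?g\<rfloor> = i div int ?g * int ?g"
    by (metis floor_of_int of_int_mult of_int_of_nat_eq)
  have M: "i - i div int ?g * int ?g = i mod int ?g" by (simp add: minus_div_mult_eq_mod)
  have "alg_state q (Suc m) k i 1 = (i mod int ?g, 0) \<and>
        alg_col q (Suc m) k i 1 = (0, nat (i div int ?g))"
  proof (cases "k = 0")
    case True
    then have "i = 0" using i i0 by simp
    then show ?thesis using True by (simp add: alg_col_def)
  qed (use C D D2 M in \<open>simp add: alg_col_def Let_def G\<close>)
  then show "alg_state q (Suc m) k i 1 = (i mod int ?g, 0)"
    and "alg_col q (Suc m) k i 1 = (0, nat (i div int ?g))" by simp_all
qed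

lemma alg_col_Suc_all:
  assumes st: "alg_state q (Suc m) k i 1 = (i1, w1)"
    and first: "alg_col q (Suc m) k i 1 = f 1"
    and rest: "\<And>j. j \<in> {1..m} \<Longrightarrow> alg_col q m (k - w1) i1 j = g j"
    and shift: "\<And>j. 1 \<le> j \<Longrightarrow> f (Suc j) = (fst (g j), snd (g j) * q ^ w1)"
    and j: "j \<in> {1..Suc m}"
  shows "alg_col q (Suc m) k i j = f j"
proof (cases "j = 1")
  case False
  then obtain j' where "j = Suc j'" "j' \<in> {1..m}" using j by (cases j) auto
  then show ?thesis using alg_col_Suc_shift[OF st] rest shift by simp
qed (use first in simp)

section \<open>Base-q expansions\<close>

primrec horner :: "nat \<Rightarrow> (nat \<Rightarrow> nat) \<Rightarrow> nat \<Rightarrow> nat" where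
  "horner q f 0 = 0"
| "horner q f (Suc k) = q * horner q f k + f (Suc k)"

lemma horner_eq_sum: "horner q f k = (\<Sum>r\<in>{1..k}. f r * q ^ (k - r))"
proof (induction k)
  case (Suc k)
  have "(\<Sum>r\<in>{1..k}. f r * q ^ (Suc k - r)) = q * (\<Sum>r\<in>{1..k}. f r * q ^ (k - r))"
    by (simp add: sum_distrib_left Suc_diff_le mult.left_commute)
  then show ?case using Suc by simp
qed simp

lemma horner_cong: "(\<And>s. s \<in> {1..k} \<Longrightarrow> f s = g s) \<Longrightarrow> horner q f k = horner q g k"
  by (induction k) auto

lemma horner_zero [simp]: "horner q (\<lambda>_. 0) k = 0"
  by (induction k) auto

lemma horner_less_power:
  assumes "\<And>s. s \<in> {1..k} \<Longrightarrow> f s < q"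
  shows "horner q f k < q ^ k"
  using assms
proof (induction k)
  case (Suc k)
  then have "horner q f k + 1 \<le> q ^ k" and "f (Suc k) < q" by auto
  then have "q * horner q f k + f (Suc k) < q * (horner q f k + 1)" by simp
  also have "\<dots> \<le> q * q ^ k" using \<open>horner q f k + 1 \<le> q ^ k\<close> by (rule mult_le_mono2)
  finally show ?case by simp
qed simp

lemma horner_digit:
  assumes "\<And>s. s \<in> {1..k} \<Longrightarrow> f s < q" and "s \<in> {1..k}"
  shows "horner q f k div q ^ (k - s) mod q = f s"
  using assms
proof (induction k)
  case (Suc k)
  have fk: "f (Suc k) < q" using Suc by auto
  show ?case
  proof (cases "s = Suc k")
    case False
    then have s: "s \<in> {1..k}" and e: "Suc k - s = Suc (k - s)" using Suc by auto
    have "horner q f (Suc k) div q ^ (Suc k - s) = (q * horner q f k + f (Suc k)) div q div q ^ (k - s)"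
      unfolding e by (simp add: div_mult2_eq)
    also have "(q * horner q f k + f (Suc k)) div q = horner q f k" using fk by simp
    finally show ?thesis using Suc s by simp
  qed (use fk in simp)
qed simp

lemma horner_eq_iff:
  assumes "\<And>s. s \<in> {1..k} \<Longrightarrow> f s < q" and "\<And>s. s \<in> {1..k} \<Longrightarrow> g s < q"
  shows "horner q f k = horner q g k \<longleftrightarrow> (\<forall>s\<in>{1..k}. f s = g s)"
  using horner_digit[of k f q] horner_digit[of k g q] assms horner_cong[of k f g q] by metis

lemma col_val_eq_horner: "col_val q k E c = E 0 c * q ^ k + horner q (\<lambda>t. E t c) k"
  unfolding col_val_def horner_eq_sum by (simp add: sum.atLeast_Suc_atMost)

lemma mult_power_add_eq_iff:
  assumes "(a::nat) < q ^ k" and "b < q ^ k"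
  shows "x * q ^ k + a = y * q ^ k + b \<longleftrightarrow> x = y \<and> a = b"
proof -
  have "0 < q ^ k" using assms(1) by linarith
  then have "(x * q ^ k + a) div q ^ k = x" "(y * q ^ k + b) div q ^ k = y" using assms by simp_all
  then show ?thesis by (metis add_left_cancel)
qed

section \<open>Reduced row echelon matrices\<close>

definition supported_on :: "nat set \<Rightarrow> (nat \<Rightarrow> 'a::zero) set" where
  "supported_on S = {f. \<forall>x. f x \<noteq> 0 \<longrightarrow> x \<in> S}"

lemma card_supported_on:
  assumes "finite S"
  shows "finite (supported_on S :: (nat \<Rightarrow> 'a::{zero,finite}) set) \<and>
         card (supported_on S :: (nat \<Rightarrow> 'a) set) = card (UNIV :: 'a set) ^ card S"
  using assms
proof (induction S rule: finite_induct)
  case empty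
  have "supported_on {} = {(\<lambda>_. 0) :: nat \<Rightarrow> 'a}" unfolding supported_on_def by auto
  then show ?case by simp
next
  case (insert x S)
  let ?A = "supported_on (insert x S) :: (nat \<Rightarrow> 'a) set"
  let ?B = "supported_on S :: (nat \<Rightarrow> 'a) set"
  have bij: "bij_betw (\<lambda>f. (f x, f(x := 0))) ?A (UNIV \<times> ?B)"
  proof (rule bij_betw_byWitness[where f' = "\<lambda>(a, g). g(x := a)"])
    show "\<forall>a'\<in>UNIV \<times> ?B. (\<lambda>f. (f x, f(x := 0))) ((\<lambda>(a, g). g(x := a)) a') = a'"
      using insert(2) unfolding supported_on_def by (force simp: fun_eq_iff)
  qed (auto simp: supported_on_def split: if_splits)
  then show ?case
    using insert bij_betw_finite[OF bij] bij_betw_same_card[OF bij] by (simp add: card_cartesian_product)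
qed

definition lead_idx :: "(nat \<Rightarrow> 'a::zero) \<Rightarrow> nat" where
  "lead_idx x = (GREATEST c. x c \<noteq> 0)"

lemma lead_pos_eq_lead_idx: "lead_pos M r = lead_idx (M r)"
  unfolding lead_pos_def lead_idx_def ..

lemma lead_idx_eqI:
  assumes "x c \<noteq> 0" and "\<And>c'. c < c' \<Longrightarrow> x c' = 0"
  shows "lead_idx x = c"
  unfolding lead_idx_def using assms by (intro Greatest_equality) (auto simp: not_le[symmetric])

lemma
  assumes "\<And>c. x c \<noteq> 0 \<Longrightarrow> c \<le> n" and "x c \<noteq> 0"
  shows lead_idx_nonzero: "x (lead_idx x) \<noteq> 0"
    and lead_idx_zero_after: "lead_idx x < c' \<Longrightarrow> x c' = 0"
proof -
  show "x (lead_idx x) \<noteq> 0"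
    unfolding lead_idx_def by (rule GreatestI_nat[of _ c n]) (use assms in auto)
  show "x c' = 0" if "lead_idx x < c'"
  proof (rule ccontr)
    assume "x c' \<noteq> 0"
    then have "c' \<le> lead_idx x"
      unfolding lead_idx_def by (rule Greatest_le_nat[of _ c' n]) (use assms in auto)
    then show False using that by simp
  qed
qed

context
  fixes k n :: nat and M :: "nat \<Rightarrow> nat \<Rightarrow> 'a::field"
  assumes rref: "is_rref k n M"
begin

lemma rref_is_mat: "is_mat k n M"
  using rref unfolding is_rref_def by simp

lemma rref_lead_eq_1: "r \<in> {1..k} \<Longrightarrow> M r (lead_pos M r) = 1"
  using rref unfolding is_rref_def by simp

lemma rref_lead_decreasing:
  "r \<in> {1..k} \<Longrightarrow> r' \<in> {1..k} \<Longrightarrow> r < r' \<Longrightarrow> lead_pos M r' < lead_pos M r"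
  using rref unfolding is_rref_def by simp

lemma rref_lead_antimono:
  "r \<in> {1..k} \<Longrightarrow> r' \<in> {1..k} \<Longrightarrow> r \<le> r' \<Longrightarrow> lead_pos M r' \<le> lead_pos M r"
  using rref_lead_decreasing[of r r'] by (cases "r = r'") auto

lemma rref_pivot_col:
  "r \<in> {1..k} \<Longrightarrow> r' \<in> {1..k} \<Longrightarrow> M r' (lead_pos M r) = (if r' = r then 1 else 0)"
  using rref unfolding is_rref_def by auto

lemma rref_lead_range: "r \<in> {1..k} \<Longrightarrow> lead_pos M r \<in> {1..n}"
  using rref_lead_eq_1[of r] rref_is_mat unfolding is_mat_def by (metis one_neq_zero)

lemma rref_zero_after_lead: "r \<in> {1..k} \<Longrightarrow> lead_pos M r < c \<Longrightarrow> M r c = 0"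
  using lead_idx_zero_after[of "M r" n "lead_pos M r" c] rref_is_mat rref_lead_eq_1[of r]
  unfolding is_mat_def lead_pos_eq_lead_idx by fastforce

lemma rref_comb_at_lead:
  assumes "r0 \<in> {1..k}"
  shows "(\<Sum>r\<in>{1..k}. a r * M r (lead_pos M r0)) = a r0"
proof -
  have "(\<Sum>r\<in>{1..k}. a r * M r (lead_pos M r0)) = (\<Sum>r\<in>{1..k}. if r = r0 then a r else 0)"
    using rref_pivot_col[OF assms] by (intro sum.cong) auto
  then show ?thesis using assms by simp
qed

lemma rref_rows_indep: "rows_indep k M"
  unfolding rows_indep_def using rref_comb_at_lead by metis

end

definition lin_closed :: "(nat \<Rightarrow> 'a::field) set \<Rightarrow> bool" where
  "lin_closed X \<longleftrightarrow> (\<lambda>_. 0) \<in> X \<and> (\<forall>x\<in>X. \<forall>y\<in>X. (\<lambda>c. x c + y c) \<in> X) \<and>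
     (\<forall>x\<in>X. \<forall>t. (\<lambda>c. t * x c) \<in> X)"

lemma lin_closed_rowspan: "lin_closed (rowspan k M)"
  unfolding lin_closed_def
proof (intro conjI ballI allI)
  show "(\<lambda>_. 0) \<in> rowspan k M"
    unfolding rowspan_def by (rule CollectI, rule exI[of _ "\<lambda>_. 0"]) simp
next
  fix x y assume "x \<in> rowspan k M" "y \<in> rowspan k M"
  then obtain a b where "x = (\<lambda>c. \<Sum>r\<in>{1..k}. a r * M r c)" "y = (\<lambda>c. \<Sum>r\<in>{1..k}. b r * M r c)"
    unfolding rowspan_def by blast
  then show "(\<lambda>c. x c + y c) \<in> rowspan k M"
    unfolding rowspan_def
    by (intro CollectI exI[of _ "\<lambda>r. a r + b r"]) (simp add: sum.distrib distrib_right)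
next
  fix x t assume "x \<in> rowspan k M"
  then obtain a where "x = (\<lambda>c. \<Sum>r\<in>{1..k}. a r * M r c)" unfolding rowspan_def by blast
  then show "(\<lambda>c. t * x c) \<in> rowspan k M"
    unfolding rowspan_def
    by (intro CollectI exI[of _ "\<lambda>r. t * a r"]) (simp add: sum_distrib_left mult.assoc)
qed

lemma lin_closed_sum:
  assumes "lin_closed X" and "finite S" and "\<And>s. s \<in> S \<Longrightarrow> f s \<in> X"
  shows "(\<lambda>c. \<Sum>s\<in>S. b s * f s c) \<in> X"
  using assms(2,3)
proof (induction S rule: finite_induct)
  case empty
  then show ?case using assms(1) unfolding lin_closed_def by simp
next
  case (insert x S)
  then have "(\<lambda>c. b x * f x c) \<in> X" using assms(1) unfolding lin_closed_def by simp
  then show ?case using insert assms(1) unfolding lin_closed_def by simp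
qed

lemma lin_closed_diff:
  assumes "lin_closed X" and "x \<in> X" and "y \<in> X"
  shows "(\<lambda>c. x c - y c) \<in> X"
proof -
  have add: "\<forall>x\<in>X. \<forall>y\<in>X. (\<lambda>c. x c + y c) \<in> X" and smult: "\<forall>x\<in>X. \<forall>t. (\<lambda>c. t * x c) \<in> X"
    using assms(1) unfolding lin_closed_def by auto
  have "(\<lambda>c. (-1) * y c) \<in> X" using smult assms(3) by blast
  then have "(\<lambda>c. x c + (\<lambda>c. (-1) * y c) c) \<in> X" by (rule add[rule_format, OF assms(2)])
  then show ?thesis by simp
qed

lemma row_in_rowspan:
  assumes "r \<in> {1..k}"
  shows "M r \<in> rowspan k M"
proof -
  have "(\<Sum>r'\<in>{1..k}. (if r' = r then 1 else 0) * M r' c) = M r c" for c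
  proof -
    have "(\<Sum>r'\<in>{1..k}. (if r' = r then 1 else 0) * M r' c) = (\<Sum>r'\<in>{1..k}. if r' = r then M r c else 0)"
      by (rule sum.cong) auto
    then show ?thesis using assms by simp
  qed
  then show ?thesis unfolding rowspan_def by (intro CollectI exI[of _ "\<lambda>r'. if r' = r then 1 else 0"]) auto
qed

lemma rowspan_subset:
  assumes "lin_closed X" and "\<And>r. r \<in> {1..k} \<Longrightarrow> M r \<in> X"
  shows "rowspan k M \<subseteq> X"
proof
  fix x assume "x \<in> rowspan k M"
  then obtain a where x: "x = (\<lambda>c. \<Sum>r\<in>{1..k}. a r * M r c)" unfolding rowspan_def by blast
  show "x \<in> X"
    unfolding x by (rule lin_closed_sum[where f = M and b = a, OF assms(1) finite_atLeastAtMost assms(2)])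
qed

lemma rowspan_supported_on:
  assumes "is_mat k n M" and "x \<in> rowspan k M"
  shows "x \<in> supported_on {1..n}"
proof -
  obtain a where x: "x = (\<lambda>c. \<Sum>r\<in>{1..k}. a r * M r c)" using assms(2) unfolding rowspan_def by blast
  have "x c = 0" if "c \<notin> {1..n}" for c
    unfolding x by (intro sum.neutral ballI) (use assms(1) that in \<open>auto simp: is_mat_def\<close>)
  then show ?thesis unfolding supported_on_def by blast
qed

lemma bij_betw_rowspan_coeffs:
  assumes "rows_indep k M"
  shows "bij_betw (\<lambda>a c. \<Sum>r\<in>{1..k}. a r * M r c) (supported_on {1..k}) (rowspan k M)"
  unfolding bij_betw_def
proof
  show "inj_on (\<lambda>a c. \<Sum>r\<in>{1..k}. a r * M r c) (supported_on {1..k})"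
  proof (rule inj_onI)
    fix a b assume a: "a \<in> supported_on {1..k}" and b: "b \<in> supported_on {1..k}"
      and e: "(\<lambda>c. \<Sum>r\<in>{1..k}. a r * M r c) = (\<lambda>c. \<Sum>r\<in>{1..k}. b r * M r c)"
    have "(\<Sum>r\<in>{1..k}. (a r - b r) * M r c) = 0" for c
      using fun_cong[OF e, of c] by (simp add: left_diff_distrib sum_subtractf)
    then have "\<forall>r\<in>{1..k}. a r - b r = 0"
      using spec[OF assms[unfolded rows_indep_def], of "\<lambda>r. a r - b r"] by blast
    moreover have "a r = b r" if "r \<notin> {1..k}" for r
    proof -
      have "a r = 0" "b r = 0" using a b that unfolding supported_on_def by blast+
      then show ?thesis by simp
    qed
    ultimately show "a = b" by force
  qed
  show "(\<lambda>a c. \<Sum>r\<in>{1..k}. a r * M r c) ` supported_on {1..k} = rowspan k M"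
  proof
    show "(\<lambda>a c. \<Sum>r\<in>{1..k}. a r * M r c) ` supported_on {1..k} \<subseteq> rowspan k M"
      unfolding rowspan_def by blast
    show "rowspan k M \<subseteq> (\<lambda>a c. \<Sum>r\<in>{1..k}. a r * M r c) ` supported_on {1..k}"
    proof
      fix x assume "x \<in> rowspan k M"
      then obtain a where x: "x = (\<lambda>c. \<Sum>r\<in>{1..k}. a r * M r c)" unfolding rowspan_def by blast
      let ?a = "\<lambda>r. if r \<in> {1..k} then a r else 0"
      have "?a \<in> supported_on {1..k}" unfolding supported_on_def by auto
      then show "x \<in> (\<lambda>a c. \<Sum>r\<in>{1..k}. a r * M r c) ` supported_on {1..k}"
        by (rule image_eqI[rotated]) (simp add: x)
    qed
  qed
qed

lemma card_rowspan:
  fixes M :: "nat \<Rightarrow> nat \<Rightarrow> 'a::{field,finite}"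
  assumes "rows_indep k M"
  shows "finite (rowspan k M) \<and> card (rowspan k M) = card (UNIV :: 'a set) ^ k"
  using bij_betw_finite[OF bij_betw_rowspan_coeffs[OF assms]]
    bij_betw_same_card[OF bij_betw_rowspan_coeffs[OF assms]]
    card_supported_on[of "{1..k}", where 'a='a]
  by simp

definition lead_set :: "(nat \<Rightarrow> 'a::zero) set \<Rightarrow> nat set" where
  "lead_set X = {lead_idx x | x. x \<in> X \<and> x \<noteq> (\<lambda>_. 0)}"

lemma lead_set_subset:
  assumes "X \<subseteq> supported_on {1..n}"
  shows "lead_set X \<subseteq> {1..n}"
proof
  fix l assume "l \<in> lead_set X"
  then obtain x where x: "x \<in> X" "x \<noteq> (\<lambda>_. 0)" and l: "l = lead_idx x"
    unfolding lead_set_def by blast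
  have supp: "x c \<noteq> 0 \<Longrightarrow> c \<in> {1..n}" for c
    using assms x(1) unfolding supported_on_def by blast
  obtain c where "x c \<noteq> 0" using x(2) by auto
  then have "x l \<noteq> 0" unfolding l by (rule lead_idx_nonzero[rotated]) (use supp in auto)
  then show "l \<in> {1..n}" by (rule supp)
qed

lemma lead_set_rowspan:
  fixes M :: "nat \<Rightarrow> nat \<Rightarrow> 'a::field"
  assumes rref: "is_rref k n M"
  shows "lead_set (rowspan k M) = lead_pos M ` {1..k}"
proof
  show "lead_set (rowspan k M) \<subseteq> lead_pos M ` {1..k}"
  proof
    fix l assume "l \<in> lead_set (rowspan k M)"
    then obtain x where l: "l = lead_idx x" and xX: "x \<in> rowspan k M" and xnz: "x \<noteq> (\<lambda>_. 0)"
      unfolding lead_set_def by blast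
    obtain a where x: "x = (\<lambda>c. \<Sum>r\<in>{1..k}. a r * M r c)" using xX unfolding rowspan_def by blast
    let ?S = "{r\<in>{1..k}. a r \<noteq> 0}"
    have "?S \<noteq> {}" using xnz unfolding x by (auto intro!: sum.neutral)
    \<comment> \<open>x leads where its first row with a nonzero coefficient does\<close>
    define r0 where "r0 = Min ?S"
    have r0S: "r0 \<in> ?S" unfolding r0_def using \<open>?S \<noteq> {}\<close> by (intro Min_in) auto
    then have r0: "r0 \<in> {1..k}" by simp
    have "x (lead_pos M r0) = a r0" unfolding x using rref_comb_at_lead[OF rref r0] .
    then have x1: "x (lead_pos M r0) \<noteq> 0" using r0S by simp
    have x2: "x c' = 0" if c': "lead_pos M r0 < c'" for c'
    proof -
      have "a r * M r c' = 0" if r: "r \<in> {1..k}" for r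
      proof (cases "a r = 0")
        case False
        then have "r0 \<le> r" using r unfolding r0_def by simp
        then have "M r c' = 0"
          using rref_lead_antimono[OF rref r0 r] rref_zero_after_lead[OF rref r] c' by simp
        then show ?thesis by simp
      qed simp
      then show ?thesis unfolding x by (intro sum.neutral) blast
    qed
    show "l \<in> lead_pos M ` {1..k}" using lead_idx_eqI[of x "lead_pos M r0", OF x1 x2] l r0 by simp
  qed
  show "lead_pos M ` {1..k} \<subseteq> lead_set (rowspan k M)"
  proof
    fix l assume "l \<in> lead_pos M ` {1..k}"
    then obtain r where r: "r \<in> {1..k}" and l: "l = lead_pos M r" by blast
    have "M r \<noteq> (\<lambda>_. 0)" using rref_lead_eq_1[OF rref r] by (metis one_neq_zero)
    then show "l \<in> lead_set (rowspan k M)"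
      unfolding lead_set_def l lead_pos_eq_lead_idx using row_in_rowspan[OF r] by blast
  qed
qed

lemma strict_antimono_on_eq_if_image_eq:
  fixes f g :: "nat \<Rightarrow> nat"
  assumes f: "\<And>r r'. r \<in> {1..k} \<Longrightarrow> r' \<in> {1..k} \<Longrightarrow> r < r' \<Longrightarrow> f r' < f r"
    and g: "\<And>r r'. r \<in> {1..k} \<Longrightarrow> r' \<in> {1..k} \<Longrightarrow> r < r' \<Longrightarrow> g r' < g r"
    and im: "f ` {1..k} = g ` {1..k}"
  shows "r \<in> {1..k} \<Longrightarrow> f r = g r"
proof (induction r rule: less_induct)
  case (less r)
  \<comment> \<open>the value at r is the largest one not taken at smaller arguments\<close>
  have le: "h r \<le> h' r"
    if h: "\<And>r r'. r \<in> {1..k} \<Longrightarrow> r' \<in> {1..k} \<Longrightarrow> r < r' \<Longrightarrow> h r' < h r"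
      and h': "\<And>r r'. r \<in> {1..k} \<Longrightarrow> r' \<in> {1..k} \<Longrightarrow> r < r' \<Longrightarrow> h' r' < h' r"
      and im: "h ` {1..k} = h' ` {1..k}" and IH: "\<And>s. s \<in> {1..k} \<Longrightarrow> s < r \<Longrightarrow> h s = h' s"
    for h h' :: "nat \<Rightarrow> nat"
  proof -
    obtain s where s: "s \<in> {1..k}" "h r = h' s" using im less.prems by blast
    have "\<not> s < r"
    proof
      assume "s < r"
      then show False using IH[OF s(1)] s h[OF s(1) less.prems] by simp
    qed
    then show ?thesis using h'[OF less.prems s(1)] s(2) by (cases "r = s") auto
  qed
  show ?case
    using le[OF f g im] le[OF g f im[symmetric]] less.IH by fastforce
qed

lemma rref_rowspan_unique:
  fixes M M' :: "nat \<Rightarrow> nat \<Rightarrow> 'a::field"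
  assumes rref: "is_rref k n M" and rref': "is_rref k n M'" and eq: "rowspan k M = rowspan k M'"
  shows "M = M'"
proof -
  have im: "lead_pos M ` {1..k} = lead_pos M' ` {1..k}"
    using lead_set_rowspan[OF rref] lead_set_rowspan[OF rref'] eq by simp
  have lead: "lead_pos M r = lead_pos M' r" if "r \<in> {1..k}" for r
    by (rule strict_antimono_on_eq_if_image_eq[OF rref_lead_decreasing[OF rref]
          rref_lead_decreasing[OF rref'] im that])
  have row: "M r = M' r" if r: "r \<in> {1..k}" for r
  proof -
    let ?d = "\<lambda>c. M r c - M' r c"
    have "M' r \<in> rowspan k M" using row_in_rowspan[OF r, of M'] eq by simp
    then have "?d \<in> rowspan k M" by (rule lin_closed_diff[OF lin_closed_rowspan row_in_rowspan[OF r]])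
    then obtain a where d: "?d = (\<lambda>c. \<Sum>r\<in>{1..k}. a r * M r c)" unfolding rowspan_def by blast
    \<comment> \<open>both rows agree in every pivot column, so all coefficients of their difference vanish\<close>
    have "a r' = 0" if r': "r' \<in> {1..k}" for r'
    proof -
      have "?d (lead_pos M r') = a r'" using fun_cong[OF d] rref_comb_at_lead[OF rref r'] by simp
      moreover have "M r (lead_pos M r') = M' r (lead_pos M r')"
        using rref_pivot_col[OF rref r' r] rref_pivot_col[OF rref' r' r] lead[OF r'] by simp
      ultimately show ?thesis by simp
    qed
    then have "?d c = 0" for c using fun_cong[OF d, of c] by simp
    then show ?thesis by auto
  qed
  have "M r c = M' r c" if "r \<notin> {1..k}" for r c
    using rref_is_mat[OF rref] rref_is_mat[OF rref'] that unfolding is_mat_def by (metis (no_types))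
  then show ?thesis using row by (metis ext)
qed

lemma card_field_ge2: "2 \<le> card (UNIV :: 'a::{field,finite} set)"
proof -
  have "card {0::'a, 1} \<le> card (UNIV :: 'a set)" by (rule card_mono) auto
  then show ?thesis by simp
qed

lemma inj_on_comb_of_distinct_leads:
  fixes v :: "nat \<Rightarrow> nat \<Rightarrow> 'a::field"
  assumes L: "finite L"
    and lead: "\<And>l. l \<in> L \<Longrightarrow> v l l \<noteq> 0" and after: "\<And>l c. l \<in> L \<Longrightarrow> l < c \<Longrightarrow> v l c = 0"
  shows "inj_on (\<lambda>b c. \<Sum>l\<in>L. b l * v l c) (supported_on L)"
proof (rule inj_onI)
  fix b b' assume b: "b \<in> supported_on L" and b': "b' \<in> supported_on L"
    and eq: "(\<lambda>c. \<Sum>l\<in>L. b l * v l c) = (\<lambda>c. \<Sum>l\<in>L. b' l * v l c)"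
  define d where "d l = b l - b' l" for l
  have dz: "(\<Sum>l\<in>L. d l * v l c) = 0" for c
    using fun_cong[OF eq, of c] unfolding d_def by (simp add: left_diff_distrib sum_subtractf)
  \<comment> \<open>at the largest index where d is nonzero only one term survives\<close>
  have "d l = 0" if l: "l \<in> L" for l
  proof (rule ccontr)
    assume "d l \<noteq> 0"
    define S where "S = {l\<in>L. d l \<noteq> 0}"
    have "S \<noteq> {}" "finite S" using l \<open>d l \<noteq> 0\<close> L unfolding S_def by auto
    define l0 where "l0 = Max S"
    have l0: "l0 \<in> L" "d l0 \<noteq> 0"
      using Max_in[OF \<open>finite S\<close> \<open>S \<noteq> {}\<close>] unfolding l0_def S_def by auto
    have single: "d l' * v l' l0 = (if l' = l0 then d l0 * v l0 l0 else 0)" if l': "l' \<in> L" for l'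
    proof (cases "l' = l0 \<or> d l' = 0")
      case False
      then have "l' < l0" using l' Max_ge[OF \<open>finite S\<close>, of l'] unfolding l0_def S_def by fastforce
      then show ?thesis using after[OF l'] False by simp
    qed auto
    have "(\<Sum>l\<in>L. d l * v l l0) = (\<Sum>l\<in>L. if l = l0 then d l0 * v l0 l0 else 0)"
      using single by (rule sum.cong[OF refl])
    also have "\<dots> = d l0 * v l0 l0" using l0(1) L by simp
    finally show False using dz[of l0] l0(2) lead[OF l0(1)] by simp
  qed
  moreover have "b l = b' l" if "l \<notin> L" for l
  proof -
    have "b l = 0" "b' l = 0" using b b' that unfolding supported_on_def by blast+
    then show ?thesis by simp
  qed
  ultimately show "b = b'" unfolding d_def by force
qed

lemma lin_closed_zero_on_lead_set:
  assumes lin: "lin_closed X" and supp: "X \<subseteq> supported_on {1..n}"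
    and x: "x \<in> X" and zero: "\<And>l. l \<in> lead_set X \<Longrightarrow> x l = 0"
  shows "x = (\<lambda>_. 0)"
proof (rule ccontr)
  assume nz: "x \<noteq> (\<lambda>_. 0)"
  then obtain c where "x c \<noteq> 0" by auto
  moreover have "x c \<noteq> 0 \<Longrightarrow> c \<le> n" for c using x supp unfolding supported_on_def by auto
  ultimately have "x (lead_idx x) \<noteq> 0" by (rule lead_idx_nonzero[rotated])
  moreover have "lead_idx x \<in> lead_set X" unfolding lead_set_def using x nz by blast
  ultimately show False using zero by blast
qed

lemma inj_on_restrict_lead_set:
  assumes lin: "lin_closed X" and supp: "X \<subseteq> supported_on {1..n}"
  shows "inj_on (\<lambda>x c. if c \<in> lead_set X then x c else 0) X"
proof (rule inj_onI)
  fix x y assume x: "x \<in> X" and y: "y \<in> X"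
    and eq: "(\<lambda>c. if c \<in> lead_set X then x c else 0) = (\<lambda>c. if c \<in> lead_set X then y c else 0)"
  have "x l = y l" if "l \<in> lead_set X" for l
    using fun_cong[OF eq, of l] that by simp
  then have "(\<lambda>c. x c - y c) = (\<lambda>_. 0)"
    using lin_closed_zero_on_lead_set[OF lin supp lin_closed_diff[OF lin x y]] by simp
  then show "x = y" by (metis eq_iff_diff_eq_0 ext)
qed

lemma card_supported_on_lead_set_le:
  fixes X :: "(nat \<Rightarrow> 'a::{field,finite}) set"
  assumes lin: "lin_closed X" and supp: "X \<subseteq> supported_on {1..n}" and fin: "finite X"
  shows "card (supported_on (lead_set X) :: (nat \<Rightarrow> 'a) set) \<le> card X"
proof -
  define L where "L = lead_set X"
  have fL: "finite L" using lead_set_subset[OF supp] unfolding L_def by (rule finite_subset) simp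
  have "\<forall>l\<in>L. \<exists>x. x \<in> X \<and> x \<noteq> (\<lambda>_. 0) \<and> lead_idx x = l" unfolding L_def lead_set_def by blast
  then obtain v where v: "\<And>l. l \<in> L \<Longrightarrow> v l \<in> X \<and> v l \<noteq> (\<lambda>_. 0) \<and> lead_idx (v l) = l"
    by metis
  have lead: "v l l \<noteq> 0" "l < c \<Longrightarrow> v l c = 0" if l: "l \<in> L" for l c
  proof -
    have bound: "\<And>c. v l c \<noteq> 0 \<Longrightarrow> c \<le> n" using v[OF l] supp unfolding supported_on_def by auto
    obtain c0 where c0: "v l c0 \<noteq> 0" using v[OF l] by auto
    show "v l l \<noteq> 0" "l < c \<Longrightarrow> v l c = 0"
      using lead_idx_nonzero[of "v l" n c0, OF bound c0] lead_idx_zero_after[of "v l" n c0, OF bound c0]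
        v[OF l] by auto
  qed
  \<comment> \<open>combinations of one vector per leading index are distinct elements of X\<close>
  have "inj_on (\<lambda>b c. \<Sum>l\<in>L. b l * v l c) (supported_on L)"
    using fL lead by (rule inj_on_comb_of_distinct_leads)
  moreover have "(\<lambda>b c. \<Sum>l\<in>L. b l * v l c) ` supported_on L \<subseteq> X"
    using lin_closed_sum[OF lin fL] v by blast
  ultimately show ?thesis unfolding L_def using card_inj_on_le fin by blast
qed

lemma lead_set_card_restrict_onto:
  fixes X :: "(nat \<Rightarrow> 'a::{field,finite}) set"
  assumes lin: "lin_closed X" and supp: "X \<subseteq> supported_on {1..n}"
    and fin: "finite X" and card: "card X = card (UNIV :: 'a set) ^ k"
  shows "card (lead_set X) = k"
    and "(\<lambda>x c. if c \<in> lead_set X then x c else 0) ` X = supported_on (lead_set X)"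
proof -
  define Q where "Q = card (UNIV :: 'a set)"
  let ?\<phi> = "\<lambda>x c. if c \<in> lead_set X then x c else 0"
  have fL: "finite (lead_set X)" using lead_set_subset[OF supp] by (rule finite_subset) simp
  have fS: "finite (supported_on (lead_set X) :: (nat \<Rightarrow> 'a) set)"
    and cS: "card (supported_on (lead_set X) :: (nat \<Rightarrow> 'a) set) = Q ^ card (lead_set X)"
    using card_supported_on[OF fL, where 'a='a] unfolding Q_def by auto
  have im: "?\<phi> ` X \<subseteq> supported_on (lead_set X)" unfolding supported_on_def by (auto split: if_splits)
  have "Q ^ k \<le> Q ^ card (lead_set X)"
    using card_inj_on_le[OF inj_on_restrict_lead_set[OF lin supp] im fS] card cS unfolding Q_def by simp
  moreover have "Q ^ card (lead_set X) \<le> Q ^ k"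
    using card_supported_on_lead_set_le[OF lin supp fin] card cS unfolding Q_def by simp
  ultimately show cL: "card (lead_set X) = k"
    using card_field_ge2[where 'a='a] unfolding Q_def by (simp add: power_increasing_iff)
  show "?\<phi> ` X = supported_on (lead_set X)"
    using card_subset_eq[OF fS im] card_image[OF inj_on_restrict_lead_set[OF lin supp]] card cS cL
    unfolding Q_def by simp
qed

lemma rref_of_reduced_vectors:
  fixes y :: "nat \<Rightarrow> nat \<Rightarrow> 'a::field"
  assumes L: "L \<subseteq> {1..n}" "card L = k"
    and supp: "\<And>l. l \<in> L \<Longrightarrow> y l \<in> supported_on {1..n}"
    and unit: "\<And>l c. l \<in> L \<Longrightarrow> c \<in> L \<Longrightarrow> y l c = (if c = l then 1 else 0)"
    and after: "\<And>l c. l \<in> L \<Longrightarrow> l < c \<Longrightarrow> y l c = 0"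
  shows "\<exists>M. is_rref k n M \<and> (\<forall>r\<in>{1..k}. M r \<in> y ` L)"
proof -
  have "finite L" using L(1) by (rule finite_subset) simp
  \<comment> \<open>row r is the vector with the r-th largest leading index\<close>
  define xs where "xs = sorted_list_of_set L"
  define s where "s r = xs ! (k - r)" for r
  have sL: "s r \<in> L" if "r \<in> {1..k}" for r
    using that \<open>finite L\<close> L(2) nth_mem[of "k - r" xs] unfolding s_def xs_def by auto
  have sdec: "s r' < s r" if "r \<in> {1..k}" "r' \<in> {1..k}" "r < r'" for r r'
  proof -
    have "k - r' < k - r" "k - r < length xs" using that \<open>finite L\<close> L(2) unfolding xs_def by auto
    moreover have "sorted_wrt (<) xs" unfolding xs_def by simp
    ultimately show ?thesis unfolding s_def using sorted_wrt_nth_less by blast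
  qed
  define M where "M r c = (if r \<in> {1..k} then y (s r) c else 0)" for r c
  have Mr: "M r = y (s r)" if "r \<in> {1..k}" for r using that unfolding M_def by auto
  have lead: "lead_pos M r = s r" if r: "r \<in> {1..k}" for r
    unfolding lead_pos_eq_lead_idx Mr[OF r]
    by (rule lead_idx_eqI) (use unit[OF sL[OF r] sL[OF r]] after[OF sL[OF r]] in auto)
  have "is_rref k n M"
    unfolding is_rref_def
  proof (intro conjI ballI impI)
    show "is_mat k n M"
      using supp sL unfolding is_mat_def M_def supported_on_def by (auto split: if_splits)
  next
    fix r assume r: "r \<in> {1..k}"
    show "M r (lead_pos M r) = 1" using unit[OF sL[OF r] sL[OF r]] Mr[OF r] lead[OF r] by simp
    then show "\<exists>c. M r c \<noteq> 0" by (metis one_neq_zero)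
  next
    fix r r' assume r: "r \<in> {1..k}" and r': "r' \<in> {1..k}"
    show "r < r' \<Longrightarrow> lead_pos M r' < lead_pos M r" using sdec[OF r r'] lead[OF r] lead[OF r'] by simp
    assume "r' \<noteq> r"
    then have "s r' \<noteq> s r" using sdec[OF r r'] sdec[OF r' r] by (cases "r < r'") auto
    then show "M r' (lead_pos M r) = 0" using Mr[OF r'] lead[OF r] unit[OF sL[OF r'] sL[OF r]] by simp
  qed
  then show ?thesis using Mr sL by blast
qed

lemma reduced_vectors_exist:
  fixes X :: "(nat \<Rightarrow> 'a::{field,finite}) set"
  assumes lin: "lin_closed X" and supp: "X \<subseteq> supported_on {1..n}"
    and fin: "finite X" and card: "card X = card (UNIV :: 'a set) ^ k"
  obtains y where "\<And>l. l \<in> lead_set X \<Longrightarrow> y l \<in> X"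
    and "\<And>l c. l \<in> lead_set X \<Longrightarrow> c \<in> lead_set X \<Longrightarrow> y l c = (if c = l then 1 else 0)"
    and "\<And>l c. l \<in> lead_set X \<Longrightarrow> l < c \<Longrightarrow> y l c = 0"
proof -
  define L where "L = lead_set X"
  note onto = lead_set_card_restrict_onto(2)[OF lin supp fin card, folded L_def]
  have "\<forall>l\<in>L. \<exists>x. x \<in> X \<and> (\<lambda>c. if c \<in> L then x c else 0) = (\<lambda>c. if c = l then 1 else 0)"
  proof
    fix l assume "l \<in> L"
    then have "(\<lambda>c. if c = l then 1 else 0 :: 'a) \<in> supported_on L" unfolding supported_on_def by auto
    then obtain x where "x \<in> X" "(\<lambda>c. if c = l then 1 else 0) = (\<lambda>c. if c \<in> L then x c else 0)"
      unfolding onto[symmetric] by (rule imageE)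
    then show "\<exists>x. x \<in> X \<and> (\<lambda>c. if c \<in> L then x c else 0) = (\<lambda>c. if c = l then 1 else 0)"
      by (intro exI[of _ x]) simp
  qed
  then obtain y where y_ex: "\<forall>l\<in>L. y l \<in> X \<and>
      (\<lambda>c. if c \<in> L then y l c else 0) = (\<lambda>c. if c = l then 1 else 0)"
    by (rule bchoice[THEN exE])
  have y: "y l \<in> X" if "l \<in> L" for l using y_ex that by blast
  have unit: "y l c = (if c = l then 1 else 0)" if "l \<in> L" "c \<in> L" for l c
    using fun_cong[OF conjunct2[OF bspec[OF y_ex that(1)]], of c] that(2) by simp
  have "y l c = 0" if l: "l \<in> L" and c: "l < c" for l c
  proof -
    have bound: "\<And>c. y l c \<noteq> 0 \<Longrightarrow> c \<le> n" using y[OF l] supp unfolding supported_on_def by auto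
    have yll: "y l l \<noteq> 0" using unit[OF l l] by simp
    then have "y l \<noteq> (\<lambda>_. 0)" by auto
    then have "lead_idx (y l) \<in> L" unfolding L_def lead_set_def using y[OF l] by blast
    then have "lead_idx (y l) = l"
      using unit[OF l] lead_idx_nonzero[of "y l" n l, OF bound yll] by (auto split: if_splits)
    then show ?thesis using lead_idx_zero_after[of "y l" n l, OF bound yll] c by simp
  qed
  then show ?thesis using that y unit unfolding L_def by blast
qed

lemma rref_exists:
  fixes M :: "nat \<Rightarrow> nat \<Rightarrow> 'a::{field,finite}"
  assumes mat: "is_mat k n M" and indep: "rows_indep k M"
  shows "\<exists>M'. is_rref k n M' \<and> rowspan k M' = rowspan k M"
proof -
  define X where "X = rowspan k M"
  have lin: "lin_closed X" unfolding X_def by (rule lin_closed_rowspan)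
  have supp: "X \<subseteq> supported_on {1..n}" unfolding X_def using rowspan_supported_on[OF mat] by blast
  have fin: "finite X" and card: "card X = card (UNIV :: 'a set) ^ k"
    using card_rowspan[OF indep] unfolding X_def by auto
  obtain y where y: "\<And>l. l \<in> lead_set X \<Longrightarrow> y l \<in> X"
    and unit: "\<And>l c. l \<in> lead_set X \<Longrightarrow> c \<in> lead_set X \<Longrightarrow> y l c = (if c = l then 1 else 0)"
    and after: "\<And>l c. l \<in> lead_set X \<Longrightarrow> l < c \<Longrightarrow> y l c = 0"
    using reduced_vectors_exist[OF lin supp fin card] by blast
  have ysupp: "y l \<in> supported_on {1..n}" if "l \<in> lead_set X" for l using supp y[OF that] by blast
  obtain M' where M': "is_rref k n M'" "\<forall>r\<in>{1..k}. M' r \<in> y ` lead_set X"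
    using rref_of_reduced_vectors[OF lead_set_subset[OF supp]
        lead_set_card_restrict_onto(1)[OF lin supp fin card] ysupp unit after]
    by blast
  have "M' r \<in> X" if "r \<in> {1..k}" for r
  proof -
    from bspec[OF M'(2) that] obtain l where "l \<in> lead_set X" "M' r = y l" by (rule imageE)
    then show ?thesis using y by simp
  qed
  then have "rowspan k M' \<subseteq> X" by (rule rowspan_subset[OF lin])
  moreover have "card (rowspan k M') = card X"
    using card_rowspan[OF rref_rows_indep[OF M'(1)]] card by simp
  ultimately have "rowspan k M' = X" using card_subset_eq[OF fin] by blast
  then show ?thesis using M'(1) unfolding X_def by blast
qed

lemma RE_rowspan:
  fixes M :: "nat \<Rightarrow> nat \<Rightarrow> 'a::field"
  assumes "is_rref k n M"
  shows "RE k n (rowspan k M) = M"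
  unfolding RE_def using rref_rowspan_unique[OF _ assms] assms by (intro the_equality) auto

lemma rowspan_in_grassmannian:
  fixes M :: "nat \<Rightarrow> nat \<Rightarrow> 'a::field"
  assumes "is_rref k n M"
  shows "rowspan k M \<in> grassmannian n k"
  unfolding grassmannian_def using rref_is_mat[OF assms] rref_rows_indep[OF assms] by blast

lemma RE_grassmannian:
  fixes Y :: "(nat \<Rightarrow> 'a::{field,finite}) set"
  assumes "Y \<in> grassmannian n k"
  shows "is_rref k n (RE k n Y) \<and> rowspan k (RE k n Y) = Y"
proof -
  obtain M where M: "is_mat k n M" "rows_indep k M" "Y = rowspan k M"
    using assms unfolding grassmannian_def by blast
  obtain M' where "is_rref k n M'" "rowspan k M' = Y" using rref_exists[OF M(1,2)] M(3) by blast
  then show ?thesis using RE_rowspan by metis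
qed

section \<open>Splitting off the first column\<close>

(* Column 1 is X_1: the rightmost column of RE(X), but the first one compared by the EXT order. *)
definition col_cons :: "(nat \<Rightarrow> 'a::zero) \<Rightarrow> (nat \<Rightarrow> nat \<Rightarrow> 'a) \<Rightarrow> nat \<Rightarrow> nat \<Rightarrow> 'a" where
  "col_cons a N = (\<lambda>r c. if c = 1 then a r else if 2 \<le> c then N r (c - 1) else 0)"

definition col_tail :: "(nat \<Rightarrow> nat \<Rightarrow> 'a::zero) \<Rightarrow> nat \<Rightarrow> nat \<Rightarrow> 'a" where
  "col_tail M = (\<lambda>r c. if c = 0 then 0 else M r (Suc c))"

definition unit_col :: "nat \<Rightarrow> nat \<Rightarrow> 'a::{zero,one}" where
  "unit_col k = (\<lambda>r. if r = k then 1 else 0)"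

lemma col_cons_0 [simp]: "col_cons a N r 0 = 0"
  and col_cons_1 [simp]: "col_cons a N r (Suc 0) = a r"
  and col_cons_Suc [simp]: "1 \<le> c \<Longrightarrow> col_cons a N r (Suc c) = N r c"
  unfolding col_cons_def by simp_all

lemma col_tail_col_cons: "is_mat k m N \<Longrightarrow> col_tail (col_cons a N) = N"
  unfolding col_tail_def is_mat_def by (intro ext) (auto simp: col_cons_def)

lemma col_cons_col_tail: "is_mat k n M \<Longrightarrow> col_cons (\<lambda>r. M r 1) (col_tail M) = M"
  unfolding col_tail_def is_mat_def col_cons_def
  by (intro ext) (auto simp: not_less_eq_eq le_Suc_eq)

lemma col_cons_inj:
  assumes "is_mat k m N" and "is_mat k' m' N'" and "col_cons a N = col_cons a' N'"
  shows "a = a' \<and> N = N'"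
proof
  show "a = a'"
  proof
    fix r show "a r = a' r" using fun_cong[OF fun_cong[OF assms(3), of r], of 1] by simp
  qed
  show "N = N'" using col_tail_col_cons[OF assms(1)] col_tail_col_cons[OF assms(2)] assms(3) by metis
qed

lemma is_mat_col_cons:
  assumes a: "a \<in> supported_on {1..k}" and N: "is_mat k m N"
  shows "is_mat k (Suc m) (col_cons a N)"
  unfolding is_mat_def
proof (intro allI impI)
  fix r c assume nz: "col_cons a N r c \<noteq> 0"
  show "r \<in> {1..k} \<and> c \<in> {1..Suc m}"
  proof (cases "c = 1")
    case True
    then show ?thesis using nz a unfolding supported_on_def by auto
  next
    case False
    then obtain c0 where "c = Suc c0" "1 \<le> c0" using nz by (cases c) auto
    then show ?thesis using nz N unfolding is_mat_def by auto
  qed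
qed

lemma lead_pos_col_cons:
  assumes rref: "is_rref k m N" and r: "r \<in> {1..k}"
  shows "lead_pos (col_cons a N) r = Suc (lead_pos N r)"
  unfolding lead_pos_eq_lead_idx[of "col_cons a N"]
proof (rule lead_idx_eqI)
  have "1 \<le> lead_pos N r" using rref_lead_range[OF rref r] by simp
  then show "col_cons a N r (Suc (lead_pos N r)) \<noteq> 0" using rref_lead_eq_1[OF rref r] by simp
  fix c' assume "Suc (lead_pos N r) < c'"
  then obtain c where "c' = Suc c" "lead_pos N r < c" by (cases c') auto
  then show "col_cons a N r c' = 0" using rref_zero_after_lead[OF rref r] by simp
qed

lemma rref_col_cons:
  assumes rref: "is_rref k m N" and a: "a \<in> supported_on {1..k}"
  shows "is_rref k (Suc m) (col_cons a N)"
  unfolding is_rref_def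
proof (intro conjI ballI impI)
  note lead = lead_pos_col_cons[OF rref]
  show "is_mat k (Suc m) (col_cons a N)"
    using is_mat_col_cons[OF a rref_is_mat[OF rref]] .
  fix r assume r: "r \<in> {1..k}"
  show "col_cons a N r (lead_pos (col_cons a N) r) = 1"
    using lead[OF r] rref_lead_eq_1[OF rref r] rref_lead_range[OF rref r] by simp
  then show "\<exists>c. col_cons a N r c \<noteq> 0" by (metis one_neq_zero)
  fix r' assume r': "r' \<in> {1..k}"
  show "r < r' \<Longrightarrow> lead_pos (col_cons a N) r' < lead_pos (col_cons a N) r"
    using lead[OF r] lead[OF r'] rref_lead_decreasing[OF rref r r'] by simp
  show "r' \<noteq> r \<Longrightarrow> col_cons a N r' (lead_pos (col_cons a N) r) = 0"
    using lead[OF r] rref_pivot_col[OF rref r r'] rref_lead_range[OF rref r] by simp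
qed

lemma lead_pos_col_cons_unit:
  assumes rref: "is_rref (k - 1) m N" and k: "1 \<le> k" and r: "r \<in> {1..k}"
  shows "lead_pos (col_cons (unit_col k) N) r = (if r = k then 1 else Suc (lead_pos N r))"
proof (cases "r = k")
  case True
  have "N k c = 0" for c using rref_is_mat[OF rref] k unfolding is_mat_def by fastforce
  then have "lead_idx (col_cons (unit_col k) N k) = 1"
    by (intro lead_idx_eqI) (auto simp: unit_col_def gr0_conv_Suc Suc_less_eq2)
  then show ?thesis using True by (simp add: lead_pos_eq_lead_idx)
next
  case False
  then show ?thesis by (subst lead_pos_col_cons[OF rref]) (use r in auto)
qed

lemma rref_col_cons_unit:
  assumes rref: "is_rref (k - 1) m N" and k: "1 \<le> k"
  shows "is_rref k (Suc m) (col_cons (unit_col k) N)"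
  unfolding is_rref_def
proof (intro conjI ballI impI)
  let ?M = "col_cons (unit_col k) N"
  note lead = lead_pos_col_cons_unit[OF rref k]
  have below: "r \<in> {1..k - 1}" if "r \<in> {1..k}" "r \<noteq> k" for r using that by auto
  have Nk: "N k c = 0" for c using rref_is_mat[OF rref] k unfolding is_mat_def by fastforce
  have "unit_col k \<in> supported_on {1..k}" using k unfolding unit_col_def supported_on_def by auto
  moreover have "is_mat k m N" using rref_is_mat[OF rref] unfolding is_mat_def by fastforce
  ultimately show "is_mat k (Suc m) ?M" by (rule is_mat_col_cons)
  fix r assume r: "r \<in> {1..k}"
  show "?M r (lead_pos ?M r) = 1"
    using lead[OF r] rref_lead_eq_1[OF rref below[OF r]] rref_lead_range[OF rref below[OF r]]
    by (auto simp: unit_col_def)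
  then show "\<exists>c. ?M r c \<noteq> 0" by (metis one_neq_zero)
  fix r' assume r': "r' \<in> {1..k}"
  show "r < r' \<Longrightarrow> lead_pos ?M r' < lead_pos ?M r"
    using lead[OF r] lead[OF r'] rref_lead_decreasing[OF rref below[OF r] below[OF r']]
      rref_lead_range[OF rref below[OF r]] r r'
    by (cases "r' = k") auto
  show "r' \<noteq> r \<Longrightarrow> ?M r' (lead_pos ?M r) = 0"
    using lead[OF r] rref_pivot_col[OF rref below[OF r] below[OF r']] rref_lead_range[OF rref below[OF r]] Nk
    by (cases "r = k"; cases "r' = k") (auto simp: unit_col_def)
qed

lemma lead_pos_col_tail:
  assumes rref: "is_rref k (Suc m) M" and r: "r \<in> {1..k}" and lead2: "2 \<le> lead_pos M r"
  shows "lead_pos (col_tail M) r = lead_pos M r - 1"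
  unfolding lead_pos_eq_lead_idx[of "col_tail M"]
proof (rule lead_idx_eqI)
  show "col_tail M r (lead_pos M r - 1) \<noteq> 0"
    using lead2 rref_lead_eq_1[OF rref r] unfolding col_tail_def by (simp add: Suc_diff_1)
  fix c' assume "lead_pos M r - 1 < c'"
  then show "col_tail M r c' = 0" using rref_zero_after_lead[OF rref r] unfolding col_tail_def by simp
qed

lemma rref_col_tail:
  assumes rref: "is_rref k (Suc m) M" and "k' \<le> k"
    and lead2: "\<And>r. r \<in> {1..k'} \<Longrightarrow> 2 \<le> lead_pos M r"
    and zero: "\<And>r c. r \<notin> {1..k'} \<Longrightarrow> 2 \<le> c \<Longrightarrow> M r c = 0"
  shows "is_rref k' m (col_tail M)"
  unfolding is_rref_def
proof (intro conjI ballI impI)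
  have rk: "r \<in> {1..k}" if "r \<in> {1..k'}" for r using that \<open>k' \<le> k\<close> by auto
  have lead: "lead_pos (col_tail M) r = lead_pos M r - 1" if "r \<in> {1..k'}" for r
    using lead_pos_col_tail[OF rref rk[OF that] lead2[OF that]] .
  have at_lead: "col_tail M r (lead_pos M r0 - 1) = M r (lead_pos M r0)" if "r0 \<in> {1..k'}" for r r0
    using lead2[OF that] unfolding col_tail_def by (simp add: Suc_diff_1)
  show "is_mat k' m (col_tail M)" unfolding is_mat_def
  proof (intro allI impI)
    fix r c assume nz: "col_tail M r c \<noteq> 0"
    then have "c \<noteq> 0" and "M r (Suc c) \<noteq> 0" unfolding col_tail_def by (auto split: if_splits)
    then show "r \<in> {1..k'} \<and> c \<in> {1..m}"
      using zero[of r "Suc c"] rref_is_mat[OF rref] unfolding is_mat_def by fastforce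
  qed
  fix r assume r: "r \<in> {1..k'}"
  show "col_tail M r (lead_pos (col_tail M) r) = 1"
    using lead[OF r] at_lead[OF r] rref_lead_eq_1[OF rref rk[OF r]] by simp
  then show "\<exists>c. col_tail M r c \<noteq> 0" by (metis one_neq_zero)
  fix r' assume r': "r' \<in> {1..k'}"
  show "r < r' \<Longrightarrow> lead_pos (col_tail M) r' < lead_pos (col_tail M) r"
    using lead[OF r] lead[OF r'] rref_lead_decreasing[OF rref rk[OF r] rk[OF r']] lead2[OF r] lead2[OF r']
    by simp
  show "r' \<noteq> r \<Longrightarrow> col_tail M r' (lead_pos (col_tail M) r) = 0"
    using lead[OF r] at_lead[OF r] rref_pivot_col[OF rref rk[OF r] rk[OF r']] by simp
qed

lemma rref_first_col_cases:
  fixes M :: "nat \<Rightarrow> nat \<Rightarrow> 'a::field"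
  assumes rref: "is_rref k (Suc m) M"
  obtains (nonpivot) a N where "a \<in> supported_on {1..k}" "is_rref k m N" "M = col_cons a N"
    | (pivot) N where "1 \<le> k" "is_rref (k - 1) m N" "M = col_cons (unit_col k) N"
proof (cases "\<exists>r\<in>{1..k}. lead_pos M r = 1")
  case True
  \<comment> \<open>only the last row can lead in column 1\<close>
  then obtain r where r: "r \<in> {1..k}" "lead_pos M r = 1" by blast
  have k: "k \<in> {1..k}" using r by auto
  have "\<not> r < k" using rref_lead_decreasing[OF rref r(1) k] rref_lead_range[OF rref k] r(2) by auto
  then have lead_k: "lead_pos M k = 1" using r by auto
  have "M r' 1 = unit_col k r'" for r'
    using rref_pivot_col[OF rref k, of r'] rref_is_mat[OF rref] lead_k k
    unfolding unit_col_def is_mat_def by (cases "r' \<in> {1..k}") auto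
  then have col1: "(\<lambda>r. M r 1) = unit_col k" by blast
  have lead2: "2 \<le> lead_pos M r'" if "r' \<in> {1..k - 1}" for r'
    using rref_lead_decreasing[OF rref _ k, of r'] lead_k that by fastforce
  have zero: "M r' c = 0" if "r' \<notin> {1..k - 1}" "2 \<le> c" for r' c
  proof (cases "r' = k")
    case False
    then have "r' \<notin> {1..k}" using that by auto
    then show ?thesis using rref_is_mat[OF rref] unfolding is_mat_def by blast
  qed (use rref_zero_after_lead[OF rref k] lead_k that in auto)
  have "is_rref (k - 1) m (col_tail M)" by (rule rref_col_tail[OF rref _ lead2 zero]) simp
  moreover have "M = col_cons (unit_col k) (col_tail M)"
    using col_cons_col_tail[OF rref_is_mat[OF rref]] col1 by simp
  ultimately show ?thesis using pivot k by simp
next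
  case False
  have lead2: "2 \<le> lead_pos M r'" if "r' \<in> {1..k}" for r'
  proof -
    have "lead_pos M r' \<noteq> 1" using False that by blast
    then show ?thesis using rref_lead_range[OF rref that] by simp
  qed
  have zero: "M r' c = 0" if "r' \<notin> {1..k}" for r' c
    using rref_is_mat[OF rref] that unfolding is_mat_def by blast
  have "is_rref k m (col_tail M)" by (rule rref_col_tail[OF rref _ lead2 zero]) simp
  moreover have "(\<lambda>r. M r 1) \<in> supported_on {1..k}"
    using rref_is_mat[OF rref] unfolding is_mat_def supported_on_def by blast
  moreover have "M = col_cons (\<lambda>r. M r 1) (col_tail M)"
    using col_cons_col_tail[OF rref_is_mat[OF rref]] by simp
  ultimately show ?thesis using nonpivot by blast
qed

definition rrefs :: "nat \<Rightarrow> nat \<Rightarrow> (nat \<Rightarrow> nat \<Rightarrow> 'a::field) set" where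
  "rrefs k n = {M. is_rref k n M}"

lemma rrefs_Suc:
  "rrefs k (Suc m) = (\<lambda>(a, N). col_cons a N) ` (supported_on {1..k} \<times> rrefs k m) \<union>
     (if 1 \<le> k then col_cons (unit_col k) ` rrefs (k - 1) m else {})"
proof
  show "rrefs k (Suc m) \<subseteq> (\<lambda>(a, N). col_cons a N) ` (supported_on {1..k} \<times> rrefs k m) \<union>
     (if 1 \<le> k then col_cons (unit_col k) ` rrefs (k - 1) m else {})"
  proof
    fix M assume "M \<in> rrefs k (Suc m)"
    then have "is_rref k (Suc m) M" unfolding rrefs_def by simp
    then show "M \<in> (\<lambda>(a, N). col_cons a N) ` (supported_on {1..k} \<times> rrefs k m) \<union>
     (if 1 \<le> k then col_cons (unit_col k) ` rrefs (k - 1) m else {})"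
      by (cases rule: rref_first_col_cases) (auto simp: rrefs_def)
  qed
  show "(\<lambda>(a, N). col_cons a N) ` (supported_on {1..k} \<times> rrefs k m) \<union>
     (if 1 \<le> k then col_cons (unit_col k) ` rrefs (k - 1) m else {}) \<subseteq> rrefs k (Suc m)"
    unfolding rrefs_def using rref_col_cons rref_col_cons_unit by (auto split: if_splits)
qed

lemma inj_on_col_cons: "inj_on (\<lambda>(a, N). col_cons a N) (A \<times> rrefs k m)"
  by (rule inj_onI) (auto simp: rrefs_def dest: col_cons_inj[OF rref_is_mat rref_is_mat])

lemma inj_on_col_cons_fixed: "inj_on (col_cons b) (rrefs k m)"
  by (rule inj_onI) (auto simp: rrefs_def dest: col_cons_inj[OF rref_is_mat rref_is_mat])

lemma col_cons_ne_col_cons_unit: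
  assumes "is_rref k m N" and "is_rref (k - 1) m N'" and "1 \<le> k"
  shows "col_cons a N \<noteq> col_cons (unit_col k) N'"
proof
  assume "col_cons a N = col_cons (unit_col k) N'"
  then have "N = N'" using col_cons_inj[OF rref_is_mat[OF assms(1)] rref_is_mat[OF assms(2)]] by simp
  moreover have "N k (lead_pos N k) \<noteq> 0" using rref_lead_eq_1[OF assms(1)] assms(3) by simp
  ultimately show False using rref_is_mat[OF assms(2)] unfolding is_mat_def by fastforce
qed

lemma card_rrefs:
  "finite (rrefs k n :: (nat \<Rightarrow> nat \<Rightarrow> 'a::{field,finite}) set) \<and>
   card (rrefs k n :: (nat \<Rightarrow> nat \<Rightarrow> 'a) set) = qbinom (card (UNIV :: 'a set)) n k"
proof (induction n arbitrary: k)
  case 0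
  have "rrefs 0 0 = {(\<lambda>_ _. 0) :: nat \<Rightarrow> nat \<Rightarrow> 'a}"
    unfolding rrefs_def is_rref_def is_mat_def by (auto intro!: ext)
  moreover have "rrefs (Suc k') 0 = ({} :: (nat \<Rightarrow> nat \<Rightarrow> 'a) set)" for k'
    unfolding rrefs_def using rref_lead_range[of "Suc k'" 0 _ 1] by fastforce
  ultimately show ?case by (cases k) simp_all
next
  case (Suc m)
  let ?Q = "card (UNIV :: 'a set)"
  let ?A = "(\<lambda>(a, N). col_cons a N) ` (supported_on {1..k} \<times> (rrefs k m :: (nat \<Rightarrow> nat \<Rightarrow> 'a) set))"
  let ?B = "col_cons (unit_col k) ` (rrefs (k - 1) m :: (nat \<Rightarrow> nat \<Rightarrow> 'a) set)"
  have S: "finite (supported_on {1..k} :: (nat \<Rightarrow> 'a) set)"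
    "card (supported_on {1..k} :: (nat \<Rightarrow> 'a) set) = ?Q ^ k"
    using card_supported_on[of "{1..k}", where 'a='a] by auto
  have "card ?A = card ((supported_on {1..k} :: (nat \<Rightarrow> 'a) set) \<times> (rrefs k m :: (nat \<Rightarrow> nat \<Rightarrow> 'a) set))"
    by (rule card_image[OF inj_on_col_cons])
  then have A: "finite ?A" "card ?A = ?Q ^ k * qbinom ?Q m k"
    using Suc.IH[of k] S by (simp_all add: card_cartesian_product)
  from card_image[OF inj_on_col_cons_fixed[of "unit_col k :: nat \<Rightarrow> 'a" "k - 1" m]] have B: "finite ?B" "card ?B = qbinom ?Q m (k - 1)"
    using Suc.IH[of "k - 1"] by auto
  show ?case
  proof (cases "1 \<le> k")
    case True
    have "?A \<inter> ?B = {}" using col_cons_ne_col_cons_unit[OF _ _ True] by (auto simp: rrefs_def)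
    then have "card (?A \<union> ?B) = card ?A + card ?B" by (rule card_Un_disjoint[OF A(1) B(1)])
    then show ?thesis using rrefs_Suc[of k m, where 'a='a] True A B by (simp add: qbinom_Suc[OF True])
  next
    case False
    then have "k = 0" by simp
    then show ?thesis using rrefs_Suc[of k m, where 'a='a] A by simp
  qed
qed

section \<open>Comparing extended matrices\<close>

definition lex_less :: "nat \<Rightarrow> (nat \<Rightarrow> nat) \<Rightarrow> (nat \<Rightarrow> nat) \<Rightarrow> bool" where
  "lex_less n f g \<longleftrightarrow> (\<exists>j\<in>{1..n}. (\<forall>j'\<in>{1..<j}. f j' = g j') \<and> f j < g j)"

lemma lex_less_Suc:
  "lex_less (Suc m) f g \<longleftrightarrow> f 1 < g 1 \<or> (f 1 = g 1 \<and> lex_less m (\<lambda>j. f (Suc j)) (\<lambda>j. g (Suc j)))"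
proof
  assume "lex_less (Suc m) f g"
  then obtain j where j: "j \<in> {1..Suc m}" "\<forall>j'\<in>{1..<j}. f j' = g j'" "f j < g j"
    unfolding lex_less_def by blast
  show "f 1 < g 1 \<or> (f 1 = g 1 \<and> lex_less m (\<lambda>j. f (Suc j)) (\<lambda>j. g (Suc j)))"
  proof (cases "j = 1")
    case False
    then obtain j0 where "j = Suc j0" "1 \<le> j0" using j(1) by (cases j) auto
    then show ?thesis using j unfolding lex_less_def by (auto intro!: bexI[of _ j0])
  qed (use j in simp)
next
  assume "f 1 < g 1 \<or> (f 1 = g 1 \<and> lex_less m (\<lambda>j. f (Suc j)) (\<lambda>j. g (Suc j)))"
  then show "lex_less (Suc m) f g"
  proof
    assume "f 1 = g 1 \<and> lex_less m (\<lambda>j. f (Suc j)) (\<lambda>j. g (Suc j))"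
    then obtain j where j: "f 1 = g 1" "j \<in> {1..m}" "\<forall>j'\<in>{1..<j}. f (Suc j') = g (Suc j')"
      "f (Suc j) < g (Suc j)"
      unfolding lex_less_def by blast
    have "f j' = g j'" if j': "j' \<in> {1..<Suc j}" for j'
    proof (cases "j' = 1")
      case False
      then obtain j0 where "j' = Suc j0" "j0 \<in> {1..<j}" using j' by (cases j') auto
      then show ?thesis using j(3) by simp
    qed (use j(1) in simp)
    then show ?thesis using j(2,4) unfolding lex_less_def by (intro bexI[of _ "Suc j"]) auto
  qed (auto simp: lex_less_def intro!: bexI[of _ 1])
qed

lemma lex_less_cong:
  assumes "\<And>j. j \<in> {1..n} \<Longrightarrow> f j = f' j" and "\<And>j. j \<in> {1..n} \<Longrightarrow> g j = g' j"
  shows "lex_less n f g = lex_less n f' g'"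
  unfolding lex_less_def using assms by (intro bex_cong) auto

lemma lex_less_mult: "0 < (c::nat) \<Longrightarrow> lex_less n (\<lambda>j. c * f j) (\<lambda>j. c * g j) = lex_less n f g"
  unfolding lex_less_def by simp

definition pivot_ind :: "nat \<Rightarrow> (nat \<Rightarrow> nat \<Rightarrow> 'a::zero) \<Rightarrow> nat \<Rightarrow> nat" where
  "pivot_ind k M j = (if \<exists>r\<in>{1..k}. lead_pos M r = j then 1 else 0)"

definition vec_code :: "('a \<Rightarrow> nat) \<Rightarrow> nat \<Rightarrow> nat \<Rightarrow> (nat \<Rightarrow> 'a) \<Rightarrow> nat" where
  "vec_code enc q k a = horner q (\<lambda>r. enc (a r)) k"

definition col_code :: "('a::zero \<Rightarrow> nat) \<Rightarrow> nat \<Rightarrow> nat \<Rightarrow> (nat \<Rightarrow> nat \<Rightarrow> 'a) \<Rightarrow> nat \<Rightarrow> nat" where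
  "col_code enc q k M j = pivot_ind k M j * q ^ k + vec_code enc q k (\<lambda>r. M r j)"

lemma pivot_ind_col_cons_1:
  assumes "is_rref k m N"
  shows "pivot_ind k (col_cons a N) 1 = 0"
  unfolding pivot_ind_def using lead_pos_col_cons[OF assms] rref_lead_range[OF assms] by fastforce

lemma pivot_ind_col_cons_Suc:
  assumes "is_rref k m N"
  shows "pivot_ind k (col_cons a N) (Suc j) = pivot_ind k N j"
  unfolding pivot_ind_def using lead_pos_col_cons[OF assms] by simp

lemma pivot_ind_col_cons_unit_1:
  assumes "is_rref (k - 1) m N" and "1 \<le> k"
  shows "pivot_ind k (col_cons (unit_col k) N) 1 = 1"
  unfolding pivot_ind_def using lead_pos_col_cons_unit[OF assms] assms(2) by force

lemma pivot_ind_col_cons_unit_Suc: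
  assumes rref: "is_rref (k - 1) m N" and k: "1 \<le> k" and j: "1 \<le> j"
  shows "pivot_ind k (col_cons (unit_col k) N) (Suc j) = pivot_ind (k - 1) N j"
proof -
  note lead = lead_pos_col_cons_unit[OF rref k]
  have "(\<exists>r\<in>{1..k}. lead_pos (col_cons (unit_col k) N) r = Suc j) \<longleftrightarrow>
        (\<exists>r\<in>{1..k - 1}. lead_pos N r = j)"
  proof
    assume "\<exists>r\<in>{1..k}. lead_pos (col_cons (unit_col k) N) r = Suc j"
    then obtain r where r: "r \<in> {1..k}" "lead_pos (col_cons (unit_col k) N) r = Suc j" by blast
    then have "r \<noteq> k" using lead[OF r(1)] j by auto
    then show "\<exists>r\<in>{1..k - 1}. lead_pos N r = j" using r lead[OF r(1)] by auto
  next
    assume "\<exists>r\<in>{1..k - 1}. lead_pos N r = j"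
    then obtain r where "r \<in> {1..k - 1}" "lead_pos N r = j" by blast
    then show "\<exists>r\<in>{1..k}. lead_pos (col_cons (unit_col k) N) r = Suc j"
      using lead[of r] by (intro bexI[of _ r]) auto
  qed
  then show ?thesis unfolding pivot_ind_def by simp
qed

locale field_encoding =
  fixes enc :: "'a::{field,finite} \<Rightarrow> nat" and q :: nat
  assumes card_UNIV: "card (UNIV :: 'a set) = q"
    and enc_bij: "bij_betw enc UNIV {0..<q}"
    and enc_0: "enc 0 = 0" and enc_1: "enc 1 = 1"
begin

lemma q_ge_2: "2 \<le> q"
  using card_field_ge2[where 'a='a] card_UNIV by simp

lemma enc_less: "enc x < q"
  using enc_bij unfolding bij_betw_def by auto

lemma enc_eq_iff: "enc x = enc y \<longleftrightarrow> x = y"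
  using enc_bij unfolding bij_betw_def inj_on_def by blast

lemma vec_code_less: "vec_code enc q k a < q ^ k"
  unfolding vec_code_def by (rule horner_less_power) (rule enc_less)

lemma bij_betw_vec_code: "bij_betw (vec_code enc q k) (supported_on {1..k}) {0..<q ^ k}"
proof -
  have inj: "inj_on (vec_code enc q k) (supported_on {1..k})"
  proof (rule inj_onI)
    fix a b assume a: "a \<in> supported_on {1..k}" and b: "b \<in> supported_on {1..k}"
      and eq: "vec_code enc q k a = vec_code enc q k b"
    have "a r = b r" if "r \<in> {1..k}" for r
      using eq that horner_eq_iff[of k "\<lambda>r. enc (a r)" q "\<lambda>r. enc (b r)"] enc_less enc_eq_iff
      unfolding vec_code_def by blast
    moreover have "a r = b r" if "r \<notin> {1..k}" for r
    proof -
      have "a r = 0" "b r = 0" using a b that unfolding supported_on_def by blast+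
      then show ?thesis by simp
    qed
    ultimately show "a = b" by blast
  qed
  moreover have "vec_code enc q k ` supported_on {1..k} = {0..<q ^ k}"
  proof (rule card_subset_eq)
    show "vec_code enc q k ` supported_on {1..k} \<subseteq> {0..<q ^ k}" using vec_code_less by auto
    show "card (vec_code enc q k ` supported_on {1..k}) = card {0..<q ^ k}"
      using card_image[OF inj] card_supported_on[of "{1..k}", where 'a='a] card_UNIV by simp
  qed simp
  ultimately show ?thesis unfolding bij_betw_def by simp
qed

lemma card_vec_code_less:
  assumes "v \<le> q ^ k"
  shows "card {a \<in> supported_on {1..k}. vec_code enc q k a < v} = v"
proof -
  let ?T = "{a \<in> supported_on {1..k}. vec_code enc q k a < v}"
  have inj: "inj_on (vec_code enc q k) ?T"
    using bij_betw_vec_code unfolding bij_betw_def inj_on_def by blast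
  have "{0..<v} \<subseteq> vec_code enc q k ` ?T"
  proof
    fix x assume x: "x \<in> {0..<v}"
    then have "x \<in> vec_code enc q k ` supported_on {1..k}"
      using assms bij_betw_vec_code unfolding bij_betw_def by auto
    then show "x \<in> vec_code enc q k ` ?T" using x by auto
  qed
  then have "vec_code enc q k ` ?T = {0..<v}" by auto
  then show ?thesis using card_image[OF inj] by simp
qed

lemma vec_code_unit_col:
  assumes "1 \<le> k"
  shows "vec_code enc q k (unit_col k) = 1"
proof -
  obtain k' where k: "k = Suc k'" using assms by (cases k) auto
  have "horner q (\<lambda>r. enc (unit_col k r)) k' = horner q (\<lambda>_. 0) k'"
    by (rule horner_cong) (auto simp: unit_col_def k enc_0)
  then show ?thesis unfolding vec_code_def using k by (simp add: unit_col_def enc_1)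
qed

lemma vec_code_Suc_last_0:
  "a (Suc k) = 0 \<Longrightarrow> vec_code enc q (Suc k) a = q * vec_code enc q k a"
  unfolding vec_code_def by (simp add: enc_0)

lemma col_code_col_cons_1:
  assumes "is_rref k m N"
  shows "col_code enc q k (col_cons a N) 1 = vec_code enc q k a"
  unfolding col_code_def pivot_ind_col_cons_1[OF assms] by simp

lemma col_code_col_cons_Suc:
  "is_rref k m N \<Longrightarrow> 1 \<le> j \<Longrightarrow> col_code enc q k (col_cons a N) (Suc j) = col_code enc q k N j"
  unfolding col_code_def by (simp add: pivot_ind_col_cons_Suc)

lemma col_code_col_cons_unit_1:
  assumes "is_rref (k - 1) m N" and "1 \<le> k"
  shows "col_code enc q k (col_cons (unit_col k) N) 1 = q ^ k + 1"
  unfolding col_code_def pivot_ind_col_cons_unit_1[OF assms] using vec_code_unit_col[OF assms(2)] by simp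

lemma vec_code_col_cons_unit_Suc:
  assumes rref: "is_rref (k - 1) m N" and k: "1 \<le> k" and j: "1 \<le> j"
  shows "vec_code enc q k (\<lambda>r. col_cons (unit_col k) N r (Suc j)) = vec_code enc q (k - 1) (\<lambda>r. N r j) * q"
proof -
  obtain k' where k': "k = Suc k'" using k by (cases k) auto
  have "N k j = 0" using rref_is_mat[OF rref] k unfolding is_mat_def by fastforce
  then show ?thesis using j vec_code_Suc_last_0[of "\<lambda>r. N r j" k'] unfolding k' by simp
qed

lemma col_code_col_cons_unit_Suc:
  assumes rref: "is_rref (k - 1) m N" and k: "1 \<le> k" and j: "1 \<le> j"
  shows "col_code enc q k (col_cons (unit_col k) N) (Suc j) = q * col_code enc q (k - 1) N j"
proof -
  have "q ^ k = q * q ^ (k - 1)" using k by (simp flip: power_Suc)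
  then show ?thesis
    unfolding col_code_def pivot_ind_col_cons_unit_Suc[OF rref k j] vec_code_col_cons_unit_Suc[OF rref k j]
    by (simp add: algebra_simps)
qed

lemma lex_less_col_cons:
  assumes "is_rref k m N" and "is_rref k m N'"
  shows "lex_less (Suc m) (col_code enc q k (col_cons a' N')) (col_code enc q k (col_cons a N)) \<longleftrightarrow>
    vec_code enc q k a' < vec_code enc q k a \<or>
    (vec_code enc q k a' = vec_code enc q k a \<and> lex_less m (col_code enc q k N') (col_code enc q k N))"
proof -
  have "lex_less m (\<lambda>j. col_code enc q k (col_cons a' N') (Suc j)) (\<lambda>j. col_code enc q k (col_cons a N) (Suc j))
      = lex_less m (col_code enc q k N') (col_code enc q k N)"
    using assms by (intro lex_less_cong) (simp_all add: col_code_col_cons_Suc)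
  then show ?thesis unfolding lex_less_Suc col_code_col_cons_1[OF assms(1)] col_code_col_cons_1[OF assms(2)]
    by simp
qed

lemma lex_less_col_cons_unit:
  assumes "is_rref (k - 1) m N" and "is_rref (k - 1) m N'" and k: "1 \<le> k"
  shows "lex_less (Suc m) (col_code enc q k (col_cons (unit_col k) N'))
      (col_code enc q k (col_cons (unit_col k) N)) \<longleftrightarrow>
    lex_less m (col_code enc q (k - 1) N') (col_code enc q (k - 1) N)"
proof -
  have "lex_less m (\<lambda>j. col_code enc q k (col_cons (unit_col k) N') (Suc j))
      (\<lambda>j. col_code enc q k (col_cons (unit_col k) N) (Suc j))
    = lex_less m (\<lambda>j. q * col_code enc q (k - 1) N' j) (\<lambda>j. q * col_code enc q (k - 1) N j)"
    using assms by (intro lex_less_cong) (simp_all add: col_code_col_cons_unit_Suc)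
  also have "\<dots> = lex_less m (col_code enc q (k - 1) N') (col_code enc q (k - 1) N)"
    using q_ge_2 by (simp add: lex_less_mult)
  finally show ?thesis
    unfolding lex_less_Suc col_code_col_cons_unit_1[OF assms(1,3)] col_code_col_cons_unit_1[OF assms(2,3)]
    by simp
qed

lemma lex_less_col_cons_col_cons_unit:
  assumes "is_rref k m N" and "is_rref (k - 1) m N'" and "1 \<le> k"
  shows "lex_less (Suc m) (col_code enc q k (col_cons a N)) (col_code enc q k (col_cons (unit_col k) N'))"
    and "\<not> lex_less (Suc m) (col_code enc q k (col_cons (unit_col k) N')) (col_code enc q k (col_cons a N))"
  using vec_code_less[of k a]
  unfolding lex_less_Suc col_code_col_cons_1[OF assms(1)] col_code_col_cons_unit_1[OF assms(2,3)] by simp_all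

end

section \<open>Ranks of echelon matrices\<close>

definition rref_preds ::
  "('a::field \<Rightarrow> nat) \<Rightarrow> nat \<Rightarrow> nat \<Rightarrow> nat \<Rightarrow> (nat \<Rightarrow> nat \<Rightarrow> 'a) \<Rightarrow> (nat \<Rightarrow> nat \<Rightarrow> 'a) set" where
  "rref_preds enc q k n M = {M' \<in> rrefs k n. lex_less n (col_code enc q k M') (col_code enc q k M)}"

definition alg_outputs :: "('a::field \<Rightarrow> nat) \<Rightarrow> nat \<Rightarrow> nat \<Rightarrow> nat \<Rightarrow> int \<Rightarrow> (nat \<Rightarrow> nat \<Rightarrow> 'a) \<Rightarrow> bool" where
  "alg_outputs enc q n k i M \<longleftrightarrow> is_rref k n M \<and>
     (\<forall>j\<in>{1..n}. alg_col q n k i j = (pivot_ind k M j, vec_code enc q k (\<lambda>r. M r j))) \<and>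
     int (card (rref_preds enc q k n M)) = i"

context field_encoding
begin

lemma card_col_cons_image:
  assumes "A \<subseteq> supported_on {1..k}"
  shows "finite ((\<lambda>(a, N). col_cons a N) ` (A \<times> (rrefs k m :: (nat \<Rightarrow> nat \<Rightarrow> 'a) set)))"
    and "card ((\<lambda>(a, N). col_cons a N) ` (A \<times> (rrefs k m :: (nat \<Rightarrow> nat \<Rightarrow> 'a) set))) = card A * qbinom q m k"
proof -
  have "finite A"
    using card_supported_on[of "{1..k}", where 'a='a] by (auto intro: finite_subset[OF assms])
  moreover have "card ((\<lambda>(a, N). col_cons a N) ` (A \<times> (rrefs k m :: (nat \<Rightarrow> nat \<Rightarrow> 'a) set))) =
      card (A \<times> (rrefs k m :: (nat \<Rightarrow> nat \<Rightarrow> 'a) set))"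
    by (rule card_image[OF inj_on_col_cons])
  ultimately show "finite ((\<lambda>(a, N). col_cons a N) ` (A \<times> (rrefs k m :: (nat \<Rightarrow> nat \<Rightarrow> 'a) set)))"
    and "card ((\<lambda>(a, N). col_cons a N) ` (A \<times> (rrefs k m :: (nat \<Rightarrow> nat \<Rightarrow> 'a) set))) = card A * qbinom q m k"
    using card_rrefs[of k m, where 'a='a] card_UNIV by (simp_all add: card_cartesian_product)
qed

lemma card_col_cons_fixed_image:
  "card (col_cons b ` {N' \<in> rrefs k m. P N'}) = card {N' :: nat \<Rightarrow> nat \<Rightarrow> 'a. N' \<in> rrefs k m \<and> P N'}"
  by (rule card_image, rule inj_on_subset[OF inj_on_col_cons_fixed]) auto

lemma rref_preds_col_cons:
  assumes N: "is_rref k m N" and a: "a \<in> supported_on {1..k}"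
  shows "rref_preds enc q k (Suc m) (col_cons a N) =
    (\<lambda>(a, N). col_cons a N) ` ({a' \<in> supported_on {1..k}. vec_code enc q k a' < vec_code enc q k a} \<times> rrefs k m)
    \<union> col_cons a ` rref_preds enc q k m N"
    (is "_ = ?A \<union> _")
proof (intro equalityI subsetI)
  fix M' assume "M' \<in> rref_preds enc q k (Suc m) (col_cons a N)"
  then have rref': "is_rref k (Suc m) M'"
    and less: "lex_less (Suc m) (col_code enc q k M') (col_code enc q k (col_cons a N))"
    unfolding rref_preds_def rrefs_def by auto
  from rref' show "M' \<in> ?A \<union> col_cons a ` rref_preds enc q k m N"
  proof (cases rule: rref_first_col_cases)
    case (nonpivot a' N')
    show ?thesis
    proof (cases "vec_code enc q k a' < vec_code enc q k a")
      case True
      then show ?thesis using nonpivot unfolding rrefs_def by force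
    next
      case False
      then have "vec_code enc q k a' = vec_code enc q k a" "N' \<in> rref_preds enc q k m N"
        using less lex_less_col_cons[OF N nonpivot(2)] nonpivot unfolding rref_preds_def rrefs_def by auto
      moreover have "a' = a"
        using bij_betw_vec_code nonpivot(1) a calculation(1) unfolding bij_betw_def inj_on_def by blast
      ultimately show ?thesis using nonpivot(3) by blast
    qed
  next
    case (pivot N')
    then show ?thesis using less lex_less_col_cons_col_cons_unit(2)[OF N] by simp
  qed
next
  fix M' assume "M' \<in> ?A \<union> col_cons a ` rref_preds enc q k m N"
  then show "M' \<in> rref_preds enc q k (Suc m) (col_cons a N)"
    using rref_col_cons lex_less_col_cons[OF N] a unfolding rref_preds_def rrefs_def by auto
qed

lemma card_rref_preds_col_cons:
  assumes N: "is_rref k m N" and a: "a \<in> supported_on {1..k}"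
  shows "card (rref_preds enc q k (Suc m) (col_cons a N)) =
    vec_code enc q k a * qbinom q m k + card (rref_preds enc q k m N)"
proof -
  define T where "T = {a' \<in> supported_on {1..k}. vec_code enc q k a' < vec_code enc q k a}"
  have TS: "T \<subseteq> supported_on {1..k}" unfolding T_def by auto
  have "(\<lambda>(a, N). col_cons a N) ` (T \<times> rrefs k m) \<inter> col_cons a ` rref_preds enc q k m N = {}"
  proof (rule ccontr)
    assume "(\<lambda>(a, N). col_cons a N) ` (T \<times> rrefs k m) \<inter> col_cons a ` rref_preds enc q k m N \<noteq> {}"
    then obtain a' N' N'' where "a' \<in> T" "N' \<in> rrefs k m" "N'' \<in> rref_preds enc q k m N"
      "col_cons a' N' = col_cons a N''"
      by auto
    then have "a' = a"
      using col_cons_inj[OF rref_is_mat rref_is_mat] unfolding rref_preds_def rrefs_def by blast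
    then show False using \<open>a' \<in> T\<close> unfolding T_def by simp
  qed
  moreover have "finite (rref_preds enc q k m N)"
    unfolding rref_preds_def using card_rrefs[of k m, where 'a='a] by simp
  moreover have "card T = vec_code enc q k a"
    unfolding T_def using card_vec_code_less[OF less_imp_le[OF vec_code_less]] .
  ultimately show ?thesis
    unfolding rref_preds_col_cons[OF N a, folded T_def]
    using card_col_cons_image[OF TS, of m] card_col_cons_fixed_image[of a k m]
    by (simp add: card_Un_disjoint rref_preds_def)
qed

lemma rref_preds_col_cons_unit:
  assumes N: "is_rref (k - 1) m N" and k: "1 \<le> k"
  shows "rref_preds enc q k (Suc m) (col_cons (unit_col k) N) =
    (\<lambda>(a, N). col_cons a N) ` (supported_on {1..k} \<times> rrefs k m) \<union>
    col_cons (unit_col k) ` rref_preds enc q (k - 1) m N"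
    (is "_ = ?A \<union> _")
proof (intro equalityI subsetI)
  fix M' assume "M' \<in> rref_preds enc q k (Suc m) (col_cons (unit_col k) N)"
  then have rref': "is_rref k (Suc m) M'"
    and less: "lex_less (Suc m) (col_code enc q k M') (col_code enc q k (col_cons (unit_col k) N))"
    unfolding rref_preds_def rrefs_def by auto
  from rref' show "M' \<in> ?A \<union> col_cons (unit_col k) ` rref_preds enc q (k - 1) m N"
  proof (cases rule: rref_first_col_cases)
    case (nonpivot a' N')
    then show ?thesis unfolding rrefs_def by auto
  next
    case (pivot N')
    then show ?thesis
      using less lex_less_col_cons_unit[OF N _ k] unfolding rref_preds_def rrefs_def by auto
  qed
next
  fix M' assume "M' \<in> ?A \<union> col_cons (unit_col k) ` rref_preds enc q (k - 1) m N"
  then show "M' \<in> rref_preds enc q k (Suc m) (col_cons (unit_col k) N)"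
    using rref_col_cons rref_col_cons_unit[OF _ k] lex_less_col_cons_unit[OF N _ k]
      lex_less_col_cons_col_cons_unit(1)[OF _ N k]
    unfolding rref_preds_def rrefs_def by auto
qed

lemma card_rref_preds_col_cons_unit:
  assumes N: "is_rref (k - 1) m N" and k: "1 \<le> k"
  shows "card (rref_preds enc q k (Suc m) (col_cons (unit_col k) N)) =
    q ^ k * qbinom q m k + card (rref_preds enc q (k - 1) m N)"
proof -
  have "(\<lambda>(a, N). col_cons a N) ` (supported_on {1..k} \<times> rrefs k m) \<inter>
      col_cons (unit_col k) ` rref_preds enc q (k - 1) m N = {}"
    using col_cons_ne_col_cons_unit[OF _ _ k] unfolding rref_preds_def rrefs_def by auto
  moreover have "finite (rref_preds enc q (k - 1) m N)"
    unfolding rref_preds_def using card_rrefs[of "k - 1" m, where 'a='a] by simp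
  moreover have "card (supported_on {1..k} :: (nat \<Rightarrow> 'a) set) = q ^ k"
    using card_supported_on[of "{1..k}", where 'a='a] card_UNIV by simp
  ultimately show ?thesis
    unfolding rref_preds_col_cons_unit[OF N k]
    using card_col_cons_image[OF subset_refl, of k m] card_col_cons_fixed_image[of "unit_col k" "k - 1" m]
    by (simp add: card_Un_disjoint rref_preds_def)
qed

lemma alg_outputs_col_cons_unit:
  assumes N: "alg_outputs enc q m (k - 1) (i - int (q ^ k * qbinom q m k)) N"
    and k: "1 \<le> k" and i: "int (q ^ k * qbinom q m k) \<le> i"
  shows "alg_outputs enc q (Suc m) k i (col_cons (unit_col k) N)"
proof -
  let ?M = "col_cons (unit_col k) N"
  note step = alg_step_pivot[OF q_ge_2 k i]
  have rref: "is_rref (k - 1) m N" using N unfolding alg_outputs_def by simp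
  have "alg_col q (Suc m) k i j = (pivot_ind k ?M j, vec_code enc q k (\<lambda>r. ?M r j))"
    if "j \<in> {1..Suc m}" for j
    using step(1) _ _ _ that
  proof (rule alg_col_Suc_all)
    show "alg_col q (Suc m) k i 1 = (pivot_ind k ?M 1, vec_code enc q k (\<lambda>r. ?M r 1))"
      using step(2) pivot_ind_col_cons_unit_1[OF rref k] vec_code_unit_col[OF k] by simp
  qed (use N pivot_ind_col_cons_unit_Suc[OF rref k] vec_code_col_cons_unit_Suc[OF rref k]
      in \<open>auto simp: alg_outputs_def\<close>)
  then show ?thesis
    using N rref_col_cons_unit[OF rref k] card_rref_preds_col_cons_unit[OF rref k]
    unfolding alg_outputs_def by simp
qed

lemma alg_outputs_col_cons:
  assumes N: "alg_outputs enc q m k (i mod int (qbinom q m k)) N"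
    and i: "0 \<le> i" "i < int (q ^ k * qbinom q m k)"
    and a: "a \<in> supported_on {1..k}" and code: "vec_code enc q k a = nat (i div int (qbinom q m k))"
  shows "alg_outputs enc q (Suc m) k i (col_cons a N)"
proof -
  let ?M = "col_cons a N"
  note step = alg_step_nonpivot[OF q_ge_2 i]
  have rref: "is_rref k m N" using N unfolding alg_outputs_def by simp
  have "alg_col q (Suc m) k i j = (pivot_ind k ?M j, vec_code enc q k (\<lambda>r. ?M r j))"
    if "j \<in> {1..Suc m}" for j
    using step(1) _ _ _ that
  proof (rule alg_col_Suc_all)
    show "alg_col q (Suc m) k i 1 = (pivot_ind k ?M 1, vec_code enc q k (\<lambda>r. ?M r 1))"
      using step(2) pivot_ind_col_cons_1[OF rref] code by simp
  qed (use N pivot_ind_col_cons_Suc[OF rref] in \<open>auto simp: alg_outputs_def\<close>)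
  moreover have "int (card (rref_preds enc q k (Suc m) ?M)) = i"
  proof -
    have "0 \<le> i div int (qbinom q m k)" using i(1) by (simp add: div_int_pos_iff)
    then have "int (card (rref_preds enc q k (Suc m) ?M)) =
        i div int (qbinom q m k) * int (qbinom q m k) + i mod int (qbinom q m k)"
      using N card_rref_preds_col_cons[OF rref a] code unfolding alg_outputs_def by simp
    then show ?thesis by simp
  qed
  ultimately show ?thesis using rref_col_cons[OF rref a] unfolding alg_outputs_def by simp
qed

lemma alg_outputs_exists: "k \<le> n \<Longrightarrow> 0 \<le> i \<Longrightarrow> i < int (qbinom q n k) \<Longrightarrow> \<exists>M. alg_outputs enc q n k i M"
proof (induction n arbitrary: k i)
  case 0
  then have "k = 0" "i = 0" by auto
  moreover have "alg_outputs enc q 0 0 0 (\<lambda>_ _. 0)"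
    unfolding alg_outputs_def rref_preds_def lex_less_def is_rref_def is_mat_def by simp
  ultimately show ?case by auto
next
  case (Suc m)
  let ?g = "qbinom q m k"
  show ?case
  proof (cases "1 \<le> k \<and> int (q ^ k * ?g) \<le> i")
    case True
    then have "i - int (q ^ k * ?g) < int (qbinom q m (k - 1))"
      using Suc.prems qbinom_Suc[of k q m] by auto
    then obtain N where "alg_outputs enc q m (k - 1) (i - int (q ^ k * ?g)) N"
      using Suc.IH[of "k - 1"] Suc.prems(1) True by fastforce
    then show ?thesis using alg_outputs_col_cons_unit True by blast
  next
    case False
    then have i: "i < int (q ^ k * ?g)" using Suc.prems by (cases k) auto
    then have "0 < ?g" using Suc.prems by (cases "?g = 0") auto
    then have "k \<le> m" using qbinom_eq_0[of m k q] by (cases "k \<le> m") auto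
    moreover have "0 \<le> i mod int ?g" "i mod int ?g < int ?g" using \<open>0 < ?g\<close> by simp_all
    ultimately obtain N where N: "alg_outputs enc q m k (i mod int ?g) N"
      using Suc.IH by blast
    \<comment> \<open>the quotient names the first column through its base-q code\<close>
    define val where "val = i div int ?g"
    have val0: "0 \<le> val" unfolding val_def using Suc.prems(2) \<open>0 < ?g\<close> by (simp add: pos_imp_zdiv_nonneg_iff)
    have "val * int ?g \<le> i" unfolding val_def using \<open>0 < ?g\<close> by (metis minus_div_mult_eq_mod pos_mod_sign diff_ge_0_iff_ge of_nat_0_less_iff)
    then have "val * int ?g < int (q ^ k) * int ?g" using i by simp
    then have "nat val < q ^ k" using \<open>0 < ?g\<close> val0 by (simp add: mult_less_cancel_right nat_less_iff)
    then obtain a where "a \<in> supported_on {1..k}" "vec_code enc q k a = nat val"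
      using bij_betw_vec_code unfolding bij_betw_def by (metis atLeastLessThan_iff imageE zero_le)
    then show ?thesis using alg_outputs_col_cons[OF N Suc.prems(2) i] unfolding val_def by blast
  qed
qed

section \<open>Back to subspaces\<close>

lemma EXT_less: "EXT enc k n Y t j < q"
  unfolding EXT_def vX_def using enc_less q_ge_2 by auto

lemma col_val_EXT:
  assumes "j \<in> {1..n}"
  shows "col_val q k (EXT enc k n Y) j = col_code enc q k (RE k n Y) j"
proof -
  have "horner q (\<lambda>t. EXT enc k n Y t j) k = vec_code enc q k (\<lambda>r. RE k n Y r j)"
    unfolding vec_code_def by (rule horner_cong) (use assms in \<open>simp add: EXT_def\<close>)
  then show ?thesis
    unfolding col_val_eq_horner col_code_def using assms by (simp add: EXT_def vX_def pivot_ind_def)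
qed

lemma EXT_col_eq_iff:
  "(\<forall>t\<in>{0..k}. EXT enc k n Y t j = EXT enc k n Z t j) \<longleftrightarrow>
   col_val q k (EXT enc k n Y) j = col_val q k (EXT enc k n Z) j"
proof -
  have Y: "horner q (\<lambda>t. EXT enc k n Y t j) k < q ^ k"
    and Z: "horner q (\<lambda>t. EXT enc k n Z t j) k < q ^ k"
    by (simp_all add: horner_less_power EXT_less)
  have "horner q (\<lambda>t. EXT enc k n Y t j) k = horner q (\<lambda>t. EXT enc k n Z t j) k \<longleftrightarrow>
      (\<forall>t\<in>{1..k}. EXT enc k n Y t j = EXT enc k n Z t j)"
    by (rule horner_eq_iff) (simp_all add: EXT_less)
  moreover have "{0..k} = insert 0 {1..k}" by auto
  ultimately show ?thesis unfolding col_val_eq_horner mult_power_add_eq_iff[OF Y Z] by auto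
qed

lemma ext_less_iff_lex_less:
  "ext_less q enc n k Y Z \<longleftrightarrow> lex_less n (col_code enc q k (RE k n Y)) (col_code enc q k (RE k n Z))"
proof -
  have ne: "(\<exists>t\<in>{0..k}. EXT enc k n Y t j \<noteq> EXT enc k n Z t j) \<longleftrightarrow>
      col_val q k (EXT enc k n Y) j \<noteq> col_val q k (EXT enc k n Z) j" for j
    using EXT_col_eq_iff[of k n Y j Z] by blast
  have "ext_less q enc n k Y Z \<longleftrightarrow> lex_less n (col_val q k (EXT enc k n Y)) (col_val q k (EXT enc k n Z))"
    unfolding ext_less_def lex_less_def EXT_col_eq_iff ne by (intro bex_cong) auto
  also have "\<dots> \<longleftrightarrow> lex_less n (col_code enc q k (RE k n Y)) (col_code enc q k (RE k n Z))"
    by (rule lex_less_cong) (simp_all add: col_val_EXT)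
  finally show ?thesis .
qed

lemma I_EXT_rowspan:
  assumes rref: "is_rref k n M"
  shows "I_EXT q enc n k (rowspan k M) = card (rref_preds enc q k n M)"
proof -
  have "bij_betw (RE k n) {Y \<in> grassmannian n k. ext_less q enc n k Y (rowspan k M)} (rref_preds enc q k n M)"
    unfolding rref_preds_def
    by (rule bij_betw_byWitness[where f' = "rowspan k"])
      (auto simp: RE_grassmannian RE_rowspan rowspan_in_grassmannian ext_less_iff_lex_less rref rrefs_def)
  then show ?thesis unfolding I_EXT_def by (rule bij_betw_same_card)
qed

lemma EXT_rowspan_eq_alg_out:
  assumes "alg_outputs enc q n k i M"
  shows "EXT enc k n (rowspan k M) = alg_out q n k i"
proof (intro ext)
  have rref: "is_rref k n M"
    and cols: "\<And>j. j \<in> {1..n} \<Longrightarrow> alg_col q n k i j = (pivot_ind k M j, vec_code enc q k (\<lambda>r. M r j))"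
    using assms unfolding alg_outputs_def by auto
  fix r j
  have "vec_code enc q k (\<lambda>r. M r j) div q ^ (k - r) mod q = enc (M r j)" if "r \<in> {1..k}"
    unfolding vec_code_def using horner_digit[of k "\<lambda>r. enc (M r j)" q r] that enc_less by simp
  then show "EXT enc k n (rowspan k M) r j = alg_out q n k i r j"
    using cols[of j] unfolding EXT_def alg_out_def vX_def RE_rowspan[OF rref]
    by (auto simp: pivot_ind_def)
qed

end

theorem theorem4:
  fixes enc :: "'a::{field,finite} \<Rightarrow> nat"
    and q n k :: nat and i :: int
  assumes "prime_power q"
    and "card (UNIV :: 'a set) = q"
    and "bij_betw enc UNIV {0..<q}"
    and "enc 0 = 0" and "enc 1 = 1"
    and "k \<le> n"
    and "0 \<le> i" and "real_of_int i < gauss_binom q n k"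
  shows "\<exists>X \<in> grassmannian n k.
           EXT enc k n X = alg_out q n k i \<and> int (I_EXT q enc n k X) = i"
proof -
  interpret field_encoding enc q using assms(2-5) by unfold_locales
  have "i < int (qbinom q n k)" using assms(8) gauss_binom_eq_qbinom[OF q_ge_2] by simp
  then obtain M where M: "alg_outputs enc q n k i M" using alg_outputs_exists[OF assms(6,7)] by blast
  then have rref: "is_rref k n M" unfolding alg_outputs_def by simp
  show ?thesis
  proof (intro bexI conjI)
    show "EXT enc k n (rowspan k M) = alg_out q n k i" using EXT_rowspan_eq_alg_out[OF M] .
    show "int (I_EXT q enc n k (rowspan k M)) = i"
      using M I_EXT_rowspan[OF rref] unfolding alg_outputs_def by simp
  qed (rule rowspan_in_grassmannian[OF rref])
qed

end
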